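(* If $\lambda_n\to\infty$, then for every $d>-1$, $$\rho(\psi_d,\lambda_n)=1-\frac{(d-1)^2}{6\lambda_n}+O(\lambda_n^{-2}).$$
   Context: $\lambda_n>0$ is a sequence of parameters; $\xi\sim\mathrm{Poisson}(\lambda_n)$. For a real function $h$ on $[0,\infty)$, $r_n=\lambda_n^{-1}\mathrm{cov}(h(\xi),\xi)$ and $\rho(h,\lambda_n)=\mathrm{corr}(h(\xi)-r_n\xi,\ \xi^2-(2\lambda_n+1)\xi)$. Power divergence functions: $\psi_d(x)=\frac{2}{d(d+1)}x[(x/\lambda_n)^d-1]$ for $d>-1$, $d\ne0$, and $\psi_0(x)=2x\log(x/\lambda_n)$. *)

theory Defs
  imports "HOL-Probability.Probability" "HOL-Library.Landau_Symbols"
begin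

definition pois_E :: "real \<Rightarrow> (real \<Rightarrow> real) \<Rightarrow> real" where
  "pois_E l h = measure_pmf.expectation (poisson_pmf l) (\<lambda>k. h (real k))"

definition pois_cov :: "real \<Rightarrow> (real \<Rightarrow> real) \<Rightarrow> (real \<Rightarrow> real) \<Rightarrow> real" where
  "pois_cov l f g = pois_E l (\<lambda>x. f x * g x) - pois_E l f * pois_E l g"

definition pois_corr :: "real \<Rightarrow> (real \<Rightarrow> real) \<Rightarrow> (real \<Rightarrow> real) \<Rightarrow> real" where
  "pois_corr l f g = pois_cov l f g / sqrt (pois_cov l f f * pois_cov l g g)"

definition r_coef :: "(real \<Rightarrow> real) \<Rightarrow> real \<Rightarrow> real" where
  "r_coef h l = pois_cov l h (\<lambda>x. x) / l"

definition rho :: "(real \<Rightarrow> real) \<Rightarrow> real \<Rightarrow> real" where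
  "rho h l = pois_corr l (\<lambda>x. h x - r_coef h l * x) (\<lambda>x. x\<^sup>2 - (2 * l + 1) * x)"

text \<open>Power divergence functions; at x = 0 the value is 0 (0 powr d = 0, ln 0 = 0).\<close>
definition psi :: "real \<Rightarrow> real \<Rightarrow> real \<Rightarrow> real" where
  "psi d l x = (if d = 0 then 2 * x * ln (x / l)
               else 2 / (d * (d + 1)) * x * ((x / l) powr d - 1))"

end

(*
  For X ~ Poisson(l) the Stein-Chen identity E[X F(X)] = l E[F(X+1)] gives
  E[f(X) C_k(X)] = l^k E[Delta^k f(X)] for the monic Charlier polynomials C_k, which are therefore
  orthogonal with E[C_k^2] = k! l^k.  Splitting h = psi_d(., l) into its projection onto
  C_0, ..., C_3 and an orthogonal residual W turns rho into
    l^2 E[Delta^2 h] / sqrt ((l^2 E[Delta^2 h]^2 / 2 + l^3 E[Delta^3 h]^2 / 6 + E[W^2]) * 2 l^2).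
  Since psi_d(x, l) = l psi_d(x / l, 1), a Taylor expansion of psi_d(., 1) at 1, whose remainder
  is controlled by the exponential moments of (X - l) / sqrt l, yields E[Delta^2 h] = 2/l + O(l^-2),
  E[Delta^3 h] = 2(d-1)/l^2 + O(l^-3) and E[W^2] = O(l^-2); expanding
  1 / sqrt (1 + w) = 1 - w/2 + O(w^2) gives the claim.
*)

theory Submission
  imports Defs
begin

section \<open>Poisson expectations of exponentially bounded functions\<close>

text \<open>Growth condition under which all Poisson expectations below exist.\<close>

definition exp_bounded :: "(real \<Rightarrow> real) \<Rightarrow> bool" where
  "exp_bounded f \<longleftrightarrow> (\<exists>C B. \<forall>x\<ge>0. \<bar>f x\<bar> \<le> C * exp (B * x))"

lemma exp_boundedI: "(\<And>x. x \<ge> 0 \<Longrightarrow> \<bar>f x\<bar> \<le> C * exp (B * x)) \<Longrightarrow> exp_bounded f"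
  unfolding exp_bounded_def by blast

lemma exp_boundedE:
  assumes "exp_bounded f"
  obtains C B where "C \<ge> 0" "B \<ge> 0" "\<And>x. x \<ge> 0 \<Longrightarrow> \<bar>f x\<bar> \<le> C * exp (B * x)"
proof -
  obtain C B where bound: "\<And>x. x \<ge> 0 \<Longrightarrow> \<bar>f x\<bar> \<le> C * exp (B * x)"
    using assms unfolding exp_bounded_def by blast
  have "C \<ge> 0"
    using bound[of 0] abs_ge_zero[of "f 0"] by simp
  moreover have "\<bar>f x\<bar> \<le> C * exp (max B 0 * x)" if "x \<ge> 0" for x
    using bound[OF that] \<open>C \<ge> 0\<close> that
    by (smt (verit) exp_le_cancel_iff max.cobounded1 mult_left_mono mult_right_mono)
  ultimately show thesis
    using that[of C "max B 0"] by simp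
qed

lemma exp_bounded_dominated:
  assumes "exp_bounded g" "\<And>x. x \<ge> 0 \<Longrightarrow> \<bar>f x\<bar> \<le> g x"
  shows "exp_bounded f"
proof -
  obtain C B where "\<And>x. x \<ge> 0 \<Longrightarrow> \<bar>g x\<bar> \<le> C * exp (B * x)"
    using exp_boundedE[OF assms(1)] by blast
  with assms(2) show ?thesis
    by (intro exp_boundedI[of f C B]) force
qed

lemma exp_bounded_const [simp]: "exp_bounded (\<lambda>x. c)"
  by (rule exp_boundedI[of _ "\<bar>c\<bar>" 0]) auto

lemma exp_bounded_ident [simp]: "exp_bounded (\<lambda>x. x)"
proof (rule exp_boundedI[of _ 1 1])
  show "\<bar>x\<bar> \<le> 1 * exp (1 * x)" if "x \<ge> 0" for x :: real
    using that exp_ge_add_one_self[of x] by (smt (verit))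
qed

lemma exp_bounded_exp [simp]: "exp_bounded (\<lambda>x. exp (s * x))"
  by (rule exp_boundedI[of _ 1 s]) simp

lemma exp_bounded_exp_centered [simp]: "exp_bounded (\<lambda>x. exp (s * (x - c)))"
  by (rule exp_boundedI[of _ "exp (- s * c)" s]) (simp add: exp_add[symmetric] algebra_simps)

lemma exp_bounded_minus [simp]: "exp_bounded f \<Longrightarrow> exp_bounded (\<lambda>x. - f x)"
  unfolding exp_bounded_def by simp

lemma exp_bounded_abs [simp]: "exp_bounded f \<Longrightarrow> exp_bounded (\<lambda>x. \<bar>f x\<bar>)"
  unfolding exp_bounded_def by simp

lemma exp_bounded_add [simp]:
  assumes "exp_bounded f" "exp_bounded g"
  shows "exp_bounded (\<lambda>x. f x + g x)"
proof -
  obtain C1 B1 where "C1 \<ge> 0" "B1 \<ge> 0" and f: "\<And>x. x \<ge> 0 \<Longrightarrow> \<bar>f x\<bar> \<le> C1 * exp (B1 * x)"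
    using exp_boundedE[OF assms(1)] by blast
  obtain C2 B2 where "C2 \<ge> 0" "B2 \<ge> 0" and g: "\<And>x. x \<ge> 0 \<Longrightarrow> \<bar>g x\<bar> \<le> C2 * exp (B2 * x)"
    using exp_boundedE[OF assms(2)] by blast
  show ?thesis
  proof (rule exp_boundedI[of _ "C1 + C2" "B1 + B2"])
    fix x :: real
    assume "x \<ge> 0"
    then have "exp (B1 * x) \<le> exp ((B1 + B2) * x)" "exp (B2 * x) \<le> exp ((B1 + B2) * x)"
      using \<open>B1 \<ge> 0\<close> \<open>B2 \<ge> 0\<close> by (simp_all add: distrib_right)
    then have "C1 * exp (B1 * x) + C2 * exp (B2 * x) \<le> (C1 + C2) * exp ((B1 + B2) * x)"
      using \<open>C1 \<ge> 0\<close> \<open>C2 \<ge> 0\<close> by (simp add: distrib_right add_mono mult_left_mono)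
    with f[OF \<open>x \<ge> 0\<close>] g[OF \<open>x \<ge> 0\<close>] show "\<bar>f x + g x\<bar> \<le> (C1 + C2) * exp ((B1 + B2) * x)"
      by linarith
  qed
qed

lemma exp_bounded_diff [simp]:
  "exp_bounded f \<Longrightarrow> exp_bounded g \<Longrightarrow> exp_bounded (\<lambda>x. f x - g x)"
  using exp_bounded_add[of f "\<lambda>x. - g x"] by simp

lemma exp_bounded_mult [simp]:
  assumes "exp_bounded f" "exp_bounded g"
  shows "exp_bounded (\<lambda>x. f x * g x)"
proof -
  obtain C1 B1 where "C1 \<ge> 0" and f: "\<And>x. x \<ge> 0 \<Longrightarrow> \<bar>f x\<bar> \<le> C1 * exp (B1 * x)"
    using exp_boundedE[OF assms(1)] by blast
  obtain C2 B2 where g: "\<And>x. x \<ge> 0 \<Longrightarrow> \<bar>g x\<bar> \<le> C2 * exp (B2 * x)"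
    using exp_boundedE[OF assms(2)] by blast
  show ?thesis
  proof (rule exp_boundedI[of _ "C1 * C2" "B1 + B2"])
    fix x :: real
    assume "x \<ge> 0"
    then have "\<bar>f x * g x\<bar> \<le> (C1 * exp (B1 * x)) * (C2 * exp (B2 * x))"
      unfolding abs_mult using f g \<open>C1 \<ge> 0\<close> by (intro mult_mono) auto
    also have "\<dots> = (C1 * C2) * exp ((B1 + B2) * x)"
      by (simp add: distrib_right exp_add)
    finally show "\<bar>f x * g x\<bar> \<le> (C1 * C2) * exp ((B1 + B2) * x)" .
  qed
qed

lemma exp_bounded_divide [simp]: "exp_bounded f \<Longrightarrow> exp_bounded (\<lambda>x. f x / c)"
  using exp_bounded_mult[of f "\<lambda>x. 1 / c"] by simp

lemma exp_bounded_power [simp]: "exp_bounded f \<Longrightarrow> exp_bounded (\<lambda>x. f x ^ n)"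
  by (induction n) simp_all

lemma exp_bounded_sum [simp]:
  "(\<And>k. k \<in> A \<Longrightarrow> exp_bounded (f k)) \<Longrightarrow> exp_bounded (\<lambda>x. \<Sum>k\<in>A. f k x)"
  by (induction A rule: infinite_finite_induct) simp_all

lemma exp_bounded_shift:
  assumes "exp_bounded f" "c \<ge> 0"
  shows "exp_bounded (\<lambda>x. f (x + c))"
proof -
  obtain C B where f: "\<And>x. x \<ge> 0 \<Longrightarrow> \<bar>f x\<bar> \<le> C * exp (B * x)"
    using exp_boundedE[OF assms(1)] by blast
  have "\<bar>f (x + c)\<bar> \<le> (C * exp (B * c)) * exp (B * x)" if "x \<ge> 0" for x
    using f[of "x + c"] that assms(2) by (simp add: distrib_left exp_add ac_simps)
  then show ?thesis
    by (rule exp_boundedI)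
qed

lemma exp_bounded_rescale:
  assumes "exp_bounded f" "l > 0"
  shows "exp_bounded (\<lambda>x. f (x / l))"
proof -
  obtain C B where f: "\<And>x. x \<ge> 0 \<Longrightarrow> \<bar>f x\<bar> \<le> C * exp (B * x)"
    using exp_boundedE[OF assms(1)] by blast
  have "\<bar>f (x / l)\<bar> \<le> C * exp (B / l * x)" if "x \<ge> 0" for x
    using f[of "x / l"] that assms(2) by simp
  then show ?thesis
    by (rule exp_boundedI)
qed

lemma summable_poisson_exp_bounded:
  assumes "l > 0" "exp_bounded f"
  shows "summable (\<lambda>k. pmf (poisson_pmf l) k * \<bar>f (real k)\<bar>)"
proof -
  obtain C B where "C \<ge> 0" and f: "\<And>x. x \<ge> 0 \<Longrightarrow> \<bar>f x\<bar> \<le> C * exp (B * x)"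
    using exp_boundedE[OF assms(2)] by blast
  have "norm (pmf (poisson_pmf l) k * \<bar>f (real k)\<bar>) \<le> C * exp (- l) * ((l * exp B) ^ k / fact k)" for k
  proof -
    have "norm (pmf (poisson_pmf l) k * \<bar>f (real k)\<bar>) \<le> pmf (poisson_pmf l) k * (C * exp (B * real k))"
      using f[of "real k"] by (auto intro: mult_left_mono)
    also have "\<dots> = C * exp (- l) * ((l * exp B) ^ k / fact k)"
      using assms(1) by (simp add: power_mult_distrib exp_of_nat_mult[symmetric] ac_simps)
    finally show ?thesis .
  qed
  moreover have "summable (\<lambda>k. C * exp (- l) * ((l * exp B) ^ k / fact k))"
    using summable_exp[of "l * exp B"] by (intro summable_mult) (simp add: divide_inverse ac_simps)
  ultimately show ?thesis
    by (rule summable_comparison_test'[rotated])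
qed

lemma pois_E_integrable:
  assumes "l > 0" "exp_bounded f"
  shows "integrable (measure_pmf (poisson_pmf l)) (\<lambda>k. f (real k))"
  using summable_poisson_exp_bounded[OF assms]
  unfolding measure_pmf_eq_density
  by (subst integrable_density) (auto simp: integrable_count_space_nat_iff abs_mult)

lemma pois_E_sums:
  assumes "l > 0" "exp_bounded f"
  shows "(\<lambda>k. pmf (poisson_pmf l) k * f (real k)) sums pois_E l f"
proof -
  have "integrable (count_space UNIV) (\<lambda>k. pmf (poisson_pmf l) k *\<^sub>R f (real k))"
    using summable_poisson_exp_bounded[OF assms]
    by (simp add: integrable_count_space_nat_iff abs_mult)
  from sums_integral_count_space_nat[OF this] show ?thesis
    unfolding pois_E_def measure_pmf_eq_density by (subst integral_density) auto
qed

lemma pois_E_const [simp]: "pois_E l (\<lambda>x. c) = c"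
  unfolding pois_E_def by simp

lemma pois_E_cmult: "pois_E l (\<lambda>x. c * f x) = c * pois_E l f"
  unfolding pois_E_def by simp

lemma pois_E_multc: "pois_E l (\<lambda>x. f x * c) = pois_E l f * c"
  unfolding pois_E_def by simp

lemma pois_E_divide: "pois_E l (\<lambda>x. f x / c) = pois_E l f / c"
  unfolding pois_E_def by simp

lemma pois_E_minus: "pois_E l (\<lambda>x. - f x) = - pois_E l f"
  unfolding pois_E_def by simp

lemma pois_E_add:
  "l > 0 \<Longrightarrow> exp_bounded f \<Longrightarrow> exp_bounded g \<Longrightarrow>
    pois_E l (\<lambda>x. f x + g x) = pois_E l f + pois_E l g"
  unfolding pois_E_def by (intro Bochner_Integration.integral_add pois_E_integrable)

lemma pois_E_diff:
  "l > 0 \<Longrightarrow> exp_bounded f \<Longrightarrow> exp_bounded g \<Longrightarrow>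
    pois_E l (\<lambda>x. f x - g x) = pois_E l f - pois_E l g"
  unfolding pois_E_def by (intro Bochner_Integration.integral_diff pois_E_integrable)

lemma pois_E_sum:
  "l > 0 \<Longrightarrow> (\<And>k. k \<in> A \<Longrightarrow> exp_bounded (f k)) \<Longrightarrow>
    pois_E l (\<lambda>x. \<Sum>k\<in>A. f k x) = (\<Sum>k\<in>A. pois_E l (f k))"
  unfolding pois_E_def by (intro Bochner_Integration.integral_sum pois_E_integrable)

lemmas pois_E_linear = pois_E_add pois_E_diff pois_E_sum pois_E_cmult pois_E_multc pois_E_divide pois_E_minus

lemma pois_E_cong: "(\<And>x. x \<ge> 0 \<Longrightarrow> f x = g x) \<Longrightarrow> pois_E l f = pois_E l g"
  unfolding pois_E_def by (intro Bochner_Integration.integral_cong) auto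

lemma pois_E_mono:
  "l > 0 \<Longrightarrow> exp_bounded f \<Longrightarrow> exp_bounded g \<Longrightarrow> (\<And>x. x \<ge> 0 \<Longrightarrow> f x \<le> g x) \<Longrightarrow>
    pois_E l f \<le> pois_E l g"
  unfolding pois_E_def by (intro integral_mono pois_E_integrable) auto

lemma pois_E_nonneg:
  "l > 0 \<Longrightarrow> exp_bounded f \<Longrightarrow> (\<And>x. x \<ge> 0 \<Longrightarrow> 0 \<le> f x) \<Longrightarrow> 0 \<le> pois_E l f"
  using pois_E_mono[of l "\<lambda>x. 0" f] by simp

lemma pois_E_stein_chen:
  assumes "l > 0" "exp_bounded F"
  shows "pois_E l (\<lambda>x. x * F x) = l * pois_E l (\<lambda>x. F (x + 1))"
proof -
  define a where "a k = pmf (poisson_pmf l) k * (real k * F (real k))" for k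
  have "a (Suc k) = l * (pmf (poisson_pmf l) k * F (real k + 1))" for k
    using assms(1) unfolding a_def by (simp add: field_simps del: of_nat_Suc) simp
  moreover have "(\<lambda>k. l * (pmf (poisson_pmf l) k * F (real k + 1))) sums (l * pois_E l (\<lambda>x. F (x + 1)))"
    using pois_E_sums[OF assms(1) exp_bounded_shift[OF assms(2), of 1]] by (intro sums_mult) simp
  ultimately have "(\<lambda>k. a (Suc k)) sums (l * pois_E l (\<lambda>x. F (x + 1)))"
    by simp
  then have "a sums (l * pois_E l (\<lambda>x. F (x + 1)) + a 0)"
    by (simp only: sums_Suc_iff)
  then have "a sums (l * pois_E l (\<lambda>x. F (x + 1)))"
    by (simp add: a_def)
  moreover have "a sums pois_E l (\<lambda>x. x * F x)"
    unfolding a_def using assms by (intro pois_E_sums) simp_all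
  ultimately show ?thesis
    by (simp add: sums_unique2)
qed

lemma pois_E_exp:
  assumes "l > 0"
  shows "pois_E l (\<lambda>x. exp (s * x)) = exp (l * (exp s - 1))"
proof -
  have "(\<lambda>k. exp (- l) * ((l * exp s) ^ k /\<^sub>R fact k)) sums (exp (- l) * exp (l * exp s))"
    by (intro sums_mult exp_converges)
  moreover have "exp (- l) * ((l * exp s) ^ k /\<^sub>R fact k) = pmf (poisson_pmf l) k * exp (s * real k)" for k
    using assms by (simp add: field_simps power_mult_distrib exp_of_nat_mult[symmetric])
  moreover have "(\<lambda>k. pmf (poisson_pmf l) k * exp (s * real k)) sums pois_E l (\<lambda>x. exp (s * x))"
    using pois_E_sums[OF assms, of "\<lambda>x. exp (s * x)"] by simp
  ultimately show ?thesis
    by (simp add: sums_unique2 exp_add[symmetric] algebra_simps)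
qed

lemma pois_E_mult_abs_le:
  assumes "l > 0" "exp_bounded f" "exp_bounded g" "s > 0"
  shows "\<bar>pois_E l (\<lambda>x. f x * g x)\<bar> \<le> (s * pois_E l (\<lambda>x. (f x)\<^sup>2) + pois_E l (\<lambda>x. (g x)\<^sup>2) / s) / 2"
proof -
  define H where "H = (\<lambda>x. (s * (f x)\<^sup>2 + (g x)\<^sup>2 / s) / 2)"
  have "\<bar>a * b\<bar> \<le> (s * a\<^sup>2 + b\<^sup>2 / s) / 2" for a b :: real
  proof -
    have "0 \<le> (s * \<bar>a\<bar> - \<bar>b\<bar>)\<^sup>2 / s"
      using assms(4) by simp
    also have "\<dots> = s * a\<^sup>2 + b\<^sup>2 / s - 2 * \<bar>a * b\<bar>"
      using assms(4) by (simp add: field_simps power2_eq_square abs_mult)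
    finally show ?thesis
      by simp
  qed
  then have "f x * g x \<le> H x" "- (f x * g x) \<le> H x" for x
    unfolding H_def by (smt (verit))+
  then have "pois_E l (\<lambda>x. f x * g x) \<le> pois_E l H" "- pois_E l (\<lambda>x. f x * g x) \<le> pois_E l H"
    using assms by (auto simp: H_def pois_E_minus[symmetric] intro!: pois_E_mono)
  moreover have "pois_E l H = (s * pois_E l (\<lambda>x. (f x)\<^sup>2) + pois_E l (\<lambda>x. (g x)\<^sup>2) / s) / 2"
    unfolding H_def using assms by (simp add: pois_E_linear)
  ultimately show ?thesis
    by linarith
qed

section \<open>Forward differences and Charlier polynomials\<close>

definition fwd_diff :: "(real \<Rightarrow> real) \<Rightarrow> real \<Rightarrow> real" where
  "fwd_diff f x = f (x + 1) - f x"

lemma fwd_diff_const [simp]: "fwd_diff (\<lambda>x. c) = (\<lambda>x. 0)"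
  by (simp add: fwd_diff_def fun_eq_iff)

lemma fwd_diff_cmult: "fwd_diff (\<lambda>x. c * f x) = (\<lambda>x. c * fwd_diff f x)"
  by (simp add: fwd_diff_def fun_eq_iff algebra_simps)

lemma exp_bounded_fwd_diff [simp]: "exp_bounded f \<Longrightarrow> exp_bounded (fwd_diff f)"
  unfolding fwd_diff_def by (simp add: exp_bounded_shift)

lemma exp_bounded_fwd_diff_iter [simp]: "exp_bounded f \<Longrightarrow> exp_bounded ((fwd_diff ^^ k) f)"
  by (induction k) simp_all

fun charlier :: "nat \<Rightarrow> real \<Rightarrow> real \<Rightarrow> real" where
  "charlier 0 l x = 1"
| "charlier (Suc k) l x = x * charlier k l (x - 1) - l * charlier k l x"

lemma charlier_2: "charlier 2 l x = (x - l)\<^sup>2 - x"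
  by (simp add: numeral_2_eq_2 power2_eq_square algebra_simps)

lemma charlier_3: "charlier 3 l x = (x - l) ^ 3 - 3 * (x - l)\<^sup>2 + (2 - 3 * l) * (x - l) + 2 * l"
  by (simp add: numeral_3_eq_3 power2_eq_square power3_eq_cube algebra_simps)

lemma exp_bounded_charlier_shift: "exp_bounded (\<lambda>x. charlier k l (x + c))"
proof (induction k arbitrary: c)
  case (Suc k)
  have "exp_bounded (\<lambda>x. (x + c) * charlier k l (x + (c - 1)) - l * charlier k l (x + c))"
    using Suc by simp
  then show ?case
    by (simp add: algebra_simps)
qed simp

lemma exp_bounded_charlier [simp]: "exp_bounded (charlier k l)"
  using exp_bounded_charlier_shift[of k l 0] by simp

lemma pois_E_fwd_diff_adjoint:
  assumes "l > 0" "exp_bounded f" "exp_bounded g" "exp_bounded (\<lambda>x. g (x - 1))"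
  shows "pois_E l (\<lambda>x. f x * (x * g (x - 1) - l * g x)) = l * pois_E l (\<lambda>x. fwd_diff f x * g x)"
proof -
  have shifted: "exp_bounded (\<lambda>x. f (x + 1))"
    using assms(2) by (simp add: exp_bounded_shift)
  have "pois_E l (\<lambda>x. f x * (x * g (x - 1) - l * g x))
      = pois_E l (\<lambda>x. x * (f x * g (x - 1))) - l * pois_E l (\<lambda>x. f x * g x)"
    using assms by (simp add: algebra_simps pois_E_linear)
  also have "pois_E l (\<lambda>x. x * (f x * g (x - 1))) = l * pois_E l (\<lambda>x. f (x + 1) * g x)"
    using pois_E_stein_chen[of l "\<lambda>x. f x * g (x - 1)"] assms by simp
  also have "pois_E l (\<lambda>x. f (x + 1) * g x) = pois_E l (\<lambda>x. fwd_diff f x * g x) + pois_E l (\<lambda>x. f x * g x)"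
    using assms shifted by (simp add: fwd_diff_def algebra_simps pois_E_linear)
  finally show ?thesis
    by (simp add: algebra_simps)
qed

lemma pois_E_mult_charlier:
  assumes "l > 0" "exp_bounded f"
  shows "pois_E l (\<lambda>x. f x * charlier k l x) = l ^ k * pois_E l ((fwd_diff ^^ k) f)"
  using assms(2)
proof (induction k arbitrary: f)
  case (Suc k)
  have "exp_bounded (\<lambda>x. charlier k l (x - 1))"
    using exp_bounded_charlier_shift[of k l "- 1"] by simp
  then have "pois_E l (\<lambda>x. f x * charlier (Suc k) l x) = l * pois_E l (\<lambda>x. fwd_diff f x * charlier k l x)"
    using pois_E_fwd_diff_adjoint[OF assms(1) Suc.prems] by simp
  also have "\<dots> = l ^ Suc k * pois_E l ((fwd_diff ^^ Suc k) f)"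
    using Suc.IH[of "fwd_diff f"] Suc.prems by (simp add: funpow_Suc_right del: funpow.simps)
  finally show ?case .
qed simp

lemma fwd_diff_charlier: "fwd_diff (charlier k l) x = real k * charlier (k - 1) l x"
proof (induction k arbitrary: x)
  case (Suc k)
  have "fwd_diff (charlier (Suc k) l) x
      = charlier k l x + x * fwd_diff (charlier k l) (x - 1) - l * fwd_diff (charlier k l) x"
    by (simp add: fwd_diff_def algebra_simps)
  also have "\<dots> = charlier k l x + real k * (x * charlier (k - 1) l (x - 1) - l * charlier (k - 1) l x)"
    by (simp add: Suc.IH algebra_simps)
  also have "\<dots> = real (Suc k) * charlier (Suc k - 1) l x"
    by (cases k) (simp_all add: algebra_simps)
  finally show ?case .
qed (simp add: fwd_diff_def)

lemma fwd_diff_iter_charlier: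
  "(fwd_diff ^^ i) (charlier k l) = (\<lambda>x. (if i \<le> k then fact k / fact (k - i) else 0) * charlier (k - i) l x)"
proof (induction i)
  case (Suc i)
  define c where "c = (if i \<le> k then fact k / fact (k - i) else 0 :: real)"
  have "(fwd_diff ^^ Suc i) (charlier k l) = (\<lambda>x. c * real (k - i) * charlier (k - Suc i) l x)"
    unfolding funpow.simps o_apply Suc.IH c_def[symmetric] fwd_diff_cmult fwd_diff_charlier
    by (simp add: mult.assoc)
  moreover have "c * real (k - i) = (if Suc i \<le> k then fact k / fact (k - Suc i) else 0)"
  proof (cases "Suc i \<le> k")
    case True
    then have "fact (k - i) = real (k - i) * fact (k - Suc i)"
      by (metis Suc_diff_le diff_Suc_Suc fact_Suc)
    with True show ?thesis
      unfolding c_def by simp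
  qed (simp add: c_def)
  ultimately show ?case
    by simp
qed simp

lemma pois_E_charlier:
  assumes "l > 0" "k > 0"
  shows "pois_E l (charlier k l) = 0"
  using pois_E_mult_charlier[OF assms(1), of "charlier 0 l" k] assms(2)
  unfolding fwd_diff_iter_charlier by simp

lemma pois_E_charlier_mult_charlier:
  assumes "l > 0"
  shows "pois_E l (\<lambda>x. charlier j l x * charlier k l x) = (if j = k then fact k * l ^ k else 0)"
proof -
  have "pois_E l (\<lambda>x. charlier j l x * charlier k l x)
      = l ^ k * (if k \<le> j then fact j / fact (j - k) * pois_E l (charlier (j - k) l) else 0)"
    using pois_E_mult_charlier[OF assms, of "charlier j l" k]
    unfolding fwd_diff_iter_charlier pois_E_cmult by simp
  moreover have "charlier 0 l = (\<lambda>x. 1)"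
    by (simp add: fun_eq_iff)
  ultimately show ?thesis
    using pois_E_charlier[OF assms, of "j - k"] by auto
qed

section \<open>Charlier expansion of the correlation\<close>

text \<open>Orthogonal projection onto \<open>C\<^sub>0, ..., C\<^sub>n\<close>: the coefficient \<open>E[h C\<^sub>k] / E[C\<^sub>k\<^sup>2]\<close> equals \<open>E[\<Delta>\<^sup>k h] / k!\<close>.\<close>

definition charlier_proj :: "nat \<Rightarrow> real \<Rightarrow> (real \<Rightarrow> real) \<Rightarrow> real \<Rightarrow> real" where
  "charlier_proj n l h x = (\<Sum>k\<le>n. pois_E l ((fwd_diff ^^ k) h) / fact k * charlier k l x)"

lemma exp_bounded_charlier_proj [simp]: "exp_bounded (charlier_proj n l h)"
  unfolding charlier_proj_def by simp

lemma pois_E_charlier_comb_mult_charlier: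
  assumes "l > 0" "j \<le> n"
  shows "pois_E l (\<lambda>x. (\<Sum>k\<le>n. b k * charlier k l x) * charlier j l x) = b j * fact j * l ^ j"
proof -
  have "pois_E l (\<lambda>x. (\<Sum>k\<le>n. b k * charlier k l x) * charlier j l x)
      = (\<Sum>k\<le>n. b k * pois_E l (\<lambda>x. charlier k l x * charlier j l x))"
    using assms(1) by (simp add: sum_distrib_right pois_E_sum pois_E_cmult mult.assoc)
  also have "\<dots> = b j * fact j * l ^ j"
    using assms by (simp add: pois_E_charlier_mult_charlier[OF assms(1)] if_distrib cong: if_cong)
  finally show ?thesis .
qed

lemma pois_E_residual_mult_charlier:
  assumes "l > 0" "exp_bounded h" "j \<le> n"
  shows "pois_E l (\<lambda>x. (h x - charlier_proj n l h x) * charlier j l x) = 0"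
proof -
  have "pois_E l (\<lambda>x. (h x - charlier_proj n l h x) * charlier j l x)
      = pois_E l (\<lambda>x. h x * charlier j l x) - pois_E l (\<lambda>x. charlier_proj n l h x * charlier j l x)"
    using assms by (simp add: left_diff_distrib pois_E_diff)
  also have "pois_E l (\<lambda>x. h x * charlier j l x) = l ^ j * pois_E l ((fwd_diff ^^ j) h)"
    by (rule pois_E_mult_charlier[OF assms(1,2)])
  also have "pois_E l (\<lambda>x. charlier_proj n l h x * charlier j l x)
      = pois_E l ((fwd_diff ^^ j) h) / fact j * fact j * l ^ j"
    unfolding charlier_proj_def by (rule pois_E_charlier_comb_mult_charlier[OF assms(1,3)])
  finally show ?thesis
    by simp
qed

lemma pois_E_residual_mult_charlier_comb:
  assumes "l > 0" "exp_bounded h"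
  shows "pois_E l (\<lambda>x. (h x - charlier_proj n l h x) * (\<Sum>k\<le>n. b k * charlier k l x)) = 0"
  using assms
  by (simp add: sum_distrib_left pois_E_sum ac_simps pois_E_cmult
      pois_E_residual_mult_charlier[simplified ac_simps])

lemma pois_E_sq_residual_le:
  assumes "l > 0" "exp_bounded h"
  shows "pois_E l (\<lambda>x. (h x - charlier_proj n l h x)\<^sup>2)
           \<le> pois_E l (\<lambda>x. (h x - (\<Sum>k\<le>n. b k * charlier k l x))\<^sup>2)"
proof -
  define W where "W = (\<lambda>x. h x - charlier_proj n l h x)"
  define V where "V = (\<lambda>x. \<Sum>k\<le>n. (pois_E l ((fwd_diff ^^ k) h) / fact k - b k) * charlier k l x)"
  have "exp_bounded W" "exp_bounded V"
    using assms(2) by (simp_all add: W_def V_def)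
  have "h x - (\<Sum>k\<le>n. b k * charlier k l x) = W x + V x" for x
    by (simp add: W_def V_def charlier_proj_def left_diff_distrib sum_subtractf)
  then have "pois_E l (\<lambda>x. (h x - (\<Sum>k\<le>n. b k * charlier k l x))\<^sup>2)
      = pois_E l (\<lambda>x. (W x)\<^sup>2 + 2 * (W x * V x) + (V x)\<^sup>2)"
    by (intro pois_E_cong) (simp add: power2_sum)
  also have "\<dots> = pois_E l (\<lambda>x. (W x)\<^sup>2) + 2 * pois_E l (\<lambda>x. W x * V x) + pois_E l (\<lambda>x. (V x)\<^sup>2)"
    using assms(1) \<open>exp_bounded W\<close> \<open>exp_bounded V\<close> by (simp add: pois_E_linear)
  finally have "pois_E l (\<lambda>x. (h x - (\<Sum>k\<le>n. b k * charlier k l x))\<^sup>2)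
      = pois_E l (\<lambda>x. (W x)\<^sup>2) + 2 * pois_E l (\<lambda>x. W x * V x) + pois_E l (\<lambda>x. (V x)\<^sup>2)" .
  moreover have "pois_E l (\<lambda>x. W x * V x) = 0"
    unfolding W_def V_def by (rule pois_E_residual_mult_charlier_comb[OF assms])
  moreover have "0 \<le> pois_E l (\<lambda>x. (V x)\<^sup>2)"
    using assms(1) by (intro pois_E_nonneg) (simp_all add: V_def)
  ultimately show ?thesis
    by (simp add: W_def)
qed

lemma cubic_eq_charlier_comb:
  "\<exists>b. \<forall>x. a0 + a1 * (x - l) + a2 * (x - l)\<^sup>2 + a3 * (x - l) ^ 3 = (\<Sum>k\<le>3. b k * charlier k l x)"
proof
  let ?b = "\<lambda>k. [a0 + (a2 + a3) * l, a1 + a2 + a3 * (3 * l + 1), a2 + 3 * a3, a3] ! k"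
  show "\<forall>x. a0 + a1 * (x - l) + a2 * (x - l)\<^sup>2 + a3 * (x - l) ^ 3 = (\<Sum>k\<le>3. ?b k * charlier k l x)"
    by (simp add: numeral_3_eq_3 charlier_3[unfolded numeral_3_eq_3] charlier_2[unfolded numeral_2_eq_2]
        power2_eq_square power3_eq_cube algebra_simps)
qed

lemma pois_cov_centered:
  assumes "l > 0" "exp_bounded f" "exp_bounded g"
  shows "pois_cov l f g = pois_E l (\<lambda>x. (f x - pois_E l f) * (g x - pois_E l g))"
proof -
  have "pois_E l (\<lambda>x. (f x - pois_E l f) * (g x - pois_E l g))
      = pois_E l (\<lambda>x. f x * g x - (pois_E l g * f x + pois_E l f * g x) + pois_E l f * pois_E l g)"
    by (intro pois_E_cong) (simp add: algebra_simps)
  also have "\<dots> = pois_cov l f g"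
    using assms by (simp add: pois_cov_def pois_E_linear)
  finally show ?thesis ..
qed

lemma pois_E_ident: "l > 0 \<Longrightarrow> pois_E l (\<lambda>x. x) = l"
  using pois_E_mult_charlier[of l "\<lambda>x. 1" 1] by (simp add: pois_E_linear)

lemma r_coef_eq:
  assumes "l > 0" "exp_bounded h"
  shows "r_coef h l = pois_E l (fwd_diff h)"
proof -
  have "pois_cov l h (\<lambda>x. x) = pois_E l (\<lambda>x. h x * charlier 1 l x)"
    using assms by (simp add: pois_cov_def pois_E_ident algebra_simps pois_E_linear)
  also have "\<dots> = l * pois_E l (fwd_diff h)"
    using pois_E_mult_charlier[OF assms, of 1] by simp
  finally show ?thesis
    using assms(1) by (simp add: r_coef_def)
qed

lemma centered_eq_charlier:
  assumes "l > 0" "exp_bounded h"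
  shows "h x - r_coef h l * x - pois_E l (\<lambda>x. h x - r_coef h l * x)
           = (h x - charlier_proj 3 l h x) + pois_E l ((fwd_diff ^^ 2) h) / 2 * charlier 2 l x
             + pois_E l ((fwd_diff ^^ 3) h) / 6 * charlier 3 l x"
    and "x\<^sup>2 - (2 * l + 1) * x - pois_E l (\<lambda>x. x\<^sup>2 - (2 * l + 1) * x) = charlier 2 l x"
proof -
  have "fact 2 = (2 :: real)" "fact 3 = (6 :: real)"
    by (simp_all add: numeral_3_eq_3 numeral_2_eq_2)
  then have proj: "charlier_proj 3 l h x = pois_E l h + r_coef h l * (x - l)
      + pois_E l ((fwd_diff ^^ 2) h) / 2 * charlier 2 l x + pois_E l ((fwd_diff ^^ 3) h) / 6 * charlier 3 l x"
    unfolding charlier_proj_def r_coef_eq[OF assms]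
    by (simp add: numeral_3_eq_3 numeral_2_eq_2 del: charlier.simps(2)) (simp add: algebra_simps)
  show "h x - r_coef h l * x - pois_E l (\<lambda>x. h x - r_coef h l * x)
      = (h x - charlier_proj 3 l h x) + pois_E l ((fwd_diff ^^ 2) h) / 2 * charlier 2 l x
        + pois_E l ((fwd_diff ^^ 3) h) / 6 * charlier 3 l x"
    using assms by (simp add: proj pois_E_linear pois_E_ident algebra_simps)
  have "(\<lambda>x. x\<^sup>2 - (2 * l + 1) * x) = (\<lambda>x. charlier 2 l x - l\<^sup>2)"
    by (simp add: charlier_2 fun_eq_iff power2_eq_square algebra_simps)
  then have "pois_E l (\<lambda>x. x\<^sup>2 - (2 * l + 1) * x) = - l\<^sup>2"
    using assms(1) by (simp add: pois_E_linear pois_E_charlier)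
  then show "x\<^sup>2 - (2 * l + 1) * x - pois_E l (\<lambda>x. x\<^sup>2 - (2 * l + 1) * x) = charlier 2 l x"
    by (simp add: charlier_2 power2_eq_square algebra_simps)
qed

lemma rho_eq_charlier:
  assumes "l > 0" "exp_bounded h"
  shows "rho h l = l\<^sup>2 * pois_E l ((fwd_diff ^^ 2) h) /
           sqrt ((l\<^sup>2 * (pois_E l ((fwd_diff ^^ 2) h))\<^sup>2 / 2 + l ^ 3 * (pois_E l ((fwd_diff ^^ 3) h))\<^sup>2 / 6
                  + pois_E l (\<lambda>x. (h x - charlier_proj 3 l h x)\<^sup>2)) * (2 * l\<^sup>2))"
proof -
  define c2 where "c2 = pois_E l ((fwd_diff ^^ 2) h) / 2"
  define c3 where "c3 = pois_E l ((fwd_diff ^^ 3) h) / 6"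
  define C2 where "C2 = charlier 2 l"
  define C3 where "C3 = charlier 3 l"
  define W where "W = (\<lambda>x. h x - charlier_proj 3 l h x)"
  define Z where "Z = (\<lambda>x. h x - r_coef h l * x)"
  define Y where "Y = (\<lambda>x. x\<^sup>2 - (2 * l + 1) * x)"
  have bounded: "exp_bounded W" "exp_bounded Z" "exp_bounded Y" "exp_bounded C2" "exp_bounded C3"
    using assms(2) by (simp_all add: W_def Z_def Y_def C2_def C3_def)
  have Z_centered: "Z x - pois_E l Z = W x + c2 * C2 x + c3 * C3 x"
    and Y_centered: "Y x - pois_E l Y = C2 x" for x
    unfolding Z_def Y_def W_def c2_def c3_def C2_def C3_def by (rule centered_eq_charlier[OF assms])+
  have orth: "pois_E l (\<lambda>x. W x * C2 x) = 0" "pois_E l (\<lambda>x. W x * C3 x) = 0"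
    "pois_E l (\<lambda>x. C2 x * C3 x) = 0"
    "pois_E l (\<lambda>x. C2 x * C2 x) = 2 * l\<^sup>2" "pois_E l (\<lambda>x. C3 x * C3 x) = 6 * l ^ 3"
    using assms pois_E_residual_mult_charlier[OF assms, of 2 3] pois_E_residual_mult_charlier[OF assms, of 3 3]
    by (simp_all add: W_def C2_def C3_def pois_E_charlier_mult_charlier numeral_3_eq_3 numeral_2_eq_2
        del: charlier.simps(2))
  have "pois_cov l Z Z = pois_E l (\<lambda>x. (W x)\<^sup>2 + 2 * c2 * (W x * C2 x) + 2 * c3 * (W x * C3 x)
      + c2\<^sup>2 * (C2 x * C2 x) + 2 * c2 * c3 * (C2 x * C3 x) + c3\<^sup>2 * (C3 x * C3 x))"
    unfolding pois_cov_centered[OF assms(1) bounded(2,2)] Z_centered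
    by (intro pois_E_cong) (simp add: power2_eq_square algebra_simps)
  also have "\<dots> = pois_E l (\<lambda>x. (W x)\<^sup>2) + 2 * l\<^sup>2 * c2\<^sup>2 + 6 * l ^ 3 * c3\<^sup>2"
    using assms(1) bounded by (simp add: pois_E_linear orth)
  finally have var_Z: "pois_cov l Z Z = pois_E l (\<lambda>x. (W x)\<^sup>2) + 2 * l\<^sup>2 * c2\<^sup>2 + 6 * l ^ 3 * c3\<^sup>2" .
  have "pois_cov l Z Y = pois_E l (\<lambda>x. W x * C2 x + c2 * (C2 x * C2 x) + c3 * (C2 x * C3 x))"
    unfolding pois_cov_centered[OF assms(1) bounded(2,3)] Z_centered Y_centered
    by (intro pois_E_cong) (simp add: algebra_simps)
  also have "\<dots> = 2 * l\<^sup>2 * c2"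
    using assms(1) bounded by (simp add: pois_E_linear orth)
  finally have cov_ZY: "pois_cov l Z Y = 2 * l\<^sup>2 * c2" .
  have var_Y: "pois_cov l Y Y = 2 * l\<^sup>2"
    unfolding pois_cov_centered[OF assms(1) bounded(3,3)] Y_centered using orth(4) .
  have "rho h l = pois_cov l Z Y / sqrt (pois_cov l Z Z * pois_cov l Y Y)"
    by (simp add: rho_def pois_corr_def Z_def Y_def)
  then show ?thesis
    unfolding var_Z cov_ZY var_Y by (simp add: c2_def c3_def W_def power_divide)
qed

section \<open>Taylor expansion of the power divergence\<close>

text \<open>\<open>psi_deriv d k\<close> is the \<open>k\<close>-th derivative of \<open>psi d 1\<close> on \<open>(0, \<infinity>)\<close>.\<close>

definition psi_deriv :: "real \<Rightarrow> nat \<Rightarrow> real \<Rightarrow> real" where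
  "psi_deriv d k t =
     (if k = 0 then psi d 1 t
      else if k = 1 then (if d = 0 then 2 * ln t + 2 else 2 / d * t powr d - 2 / (d * (d + 1)))
      else 2 * (\<Prod>j<k - 2. d - 1 - real j) * t powr (d + 1 - real k))"

definition psi_taylor :: "real \<Rightarrow> nat \<Rightarrow> real \<Rightarrow> real" where
  "psi_taylor d n t = (\<Sum>j<n. psi_deriv d j 1 / fact j * (t - 1) ^ j)"

lemma psi_deriv_0: "psi_deriv d 0 = psi d 1"
  by (simp add: psi_deriv_def fun_eq_iff)

lemma psi_deriv_at_1: "psi_deriv d 2 1 = 2" "psi_deriv d 3 1 = 2 * (d - 1)"
  "psi_deriv d 4 1 = 2 * (d - 1) * (d - 2)"
  by (simp_all add: psi_deriv_def eval_nat_numeral algebra_simps)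

lemma psi1_has_real_derivative:
  assumes "t > 0" "d > -1"
  shows "(psi d 1 has_real_derivative psi_deriv d 1 t) (at t)"
proof (cases "d = 0")
  case True
  then have "psi d 1 = (\<lambda>t. 2 * t * ln t)"
    by (simp add: psi_def fun_eq_iff)
  moreover have "((\<lambda>t. 2 * t * ln t) has_real_derivative (2 * ln t + 2 * t * (1 / t))) (at t)"
    using assms(1) by (auto intro!: derivative_eq_intros)
  ultimately show ?thesis
    using True assms(1) by (simp add: psi_deriv_def)
next
  case False
  define c where "c = 2 / (d * (d + 1))"
  then have fun_eq: "psi d 1 = (\<lambda>t. c * t * (t powr d - 1))"
    using False by (simp add: psi_def fun_eq_iff)
  have "t powr d = t * t powr (d - 1)"
    using assms(1) by (simp add: powr_diff)
  then have "((\<lambda>t. c * t * (t powr d - 1)) has_real_derivative (c * (d + 1)) * t powr d - c) (at t)"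
    using assms(1) by (auto intro!: derivative_eq_intros simp: algebra_simps)
  moreover have "c * (d + 1) = 2 / d"
    using False assms(2) unfolding c_def by (simp add: divide_simps)
  moreover have "psi_deriv d 1 t = 2 / d * t powr d - c"
    using False by (simp add: psi_deriv_def c_def)
  ultimately show ?thesis
    unfolding fun_eq by simp
qed

lemma psi_deriv_1_has_real_derivative:
  assumes "t > 0"
  shows "(psi_deriv d 1 has_real_derivative psi_deriv d 2 t) (at t)"
proof (cases "d = 0")
  case True
  then have fun_eq: "psi_deriv d 1 = (\<lambda>t. 2 * ln t + 2)"
    by (simp add: psi_deriv_def fun_eq_iff)
  have "((\<lambda>t. 2 * ln t + 2) has_real_derivative (2 * (1 / t))) (at t)"
    using assms by (auto intro!: derivative_eq_intros)
  moreover have "t powr (- 1) = 1 / t"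
    using assms by (simp add: powr_minus divide_inverse)
  ultimately show ?thesis
    using True unfolding fun_eq by (simp add: psi_deriv_def)
next
  case False
  then have fun_eq: "psi_deriv d 1 = (\<lambda>t. 2 / d * t powr d - 2 / (d * (d + 1)))"
    by (simp add: psi_deriv_def fun_eq_iff)
  have "((\<lambda>t. 2 / d * t powr d - 2 / (d * (d + 1))) has_real_derivative (2 / d * (d * t powr (d - 1)))) (at t)"
    using assms by (auto intro!: derivative_eq_intros)
  then show ?thesis
    using False unfolding fun_eq by (simp add: psi_deriv_def)
qed

lemma psi_deriv_high_has_real_derivative:
  assumes "t > 0" "k \<ge> 2"
  shows "(psi_deriv d k has_real_derivative psi_deriv d (Suc k) t) (at t)"
proof -
  define P where "P = (\<Prod>j<k - 2. d - 1 - real j)"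
  then have fun_eq: "psi_deriv d k = (\<lambda>t. 2 * P * t powr (d + 1 - real k))"
    using assms(2) by (simp add: psi_deriv_def fun_eq_iff)
  have "((\<lambda>t. 2 * P * t powr (d + 1 - real k)) has_real_derivative
        (2 * P * ((d + 1 - real k) * t powr (d + 1 - real k - 1)))) (at t)"
    using assms(1) by (auto intro!: derivative_eq_intros)
  moreover have "(\<Prod>j<Suc k - 2. d - 1 - real j) = P * (d + 1 - real k)"
  proof -
    have "Suc k - 2 = Suc (k - 2)"
      using assms(2) by simp
    then show ?thesis
      using assms(2) by (simp add: P_def of_nat_diff)
  qed
  moreover have "d + 1 - real k - 1 = d + 1 - real (Suc k)"
    by simp
  ultimately show ?thesis
    unfolding fun_eq using assms(2) by (simp add: psi_deriv_def mult.assoc)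
qed

lemma psi_deriv_has_real_derivative:
  assumes "t > 0" "d > -1"
  shows "(psi_deriv d k has_real_derivative psi_deriv d (Suc k) t) (at t)"
proof -
  consider "k = 0" | "k = 1" | "k \<ge> 2"
    by linarith
  then show ?thesis
    by cases (use psi1_has_real_derivative[OF assms] psi_deriv_1_has_real_derivative[OF assms(1)]
        psi_deriv_high_has_real_derivative[OF assms(1)] in \<open>simp_all add: psi_deriv_0 numeral_2_eq_2\<close>)
qed

lemma psi1_bounded_unit_interval:
  assumes "d > -1"
  obtains B where "B \<ge> 0" "\<And>t. 0 \<le> t \<Longrightarrow> t \<le> 1 \<Longrightarrow> \<bar>psi d 1 t\<bar> \<le> B"
proof (cases "d = 0")
  case True
  have "\<bar>psi d 1 t\<bar> \<le> 2" if "0 \<le> t" "t \<le> 1" for t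
  proof (cases "t = 0")
    case False
    then have "t > 0"
      using that by simp
    have "- ln t \<le> 1 / t - 1"
      using ln_le_minus_one[of "1 / t"] \<open>t > 0\<close> by (simp add: ln_div)
    then have "t * (- ln t) \<le> 1 - t"
      using mult_left_mono[of "- ln t" "1 / t - 1" t] \<open>t > 0\<close> by (simp add: algebra_simps)
    moreover have "t * ln t \<le> 0"
      using that \<open>t > 0\<close> by (simp add: mult_nonneg_nonpos)
    ultimately show ?thesis
      using True that by (simp add: psi_def abs_if)
  qed (simp add: psi_def)
  then show thesis
    using that[of 2] by simp
next
  case False
  define c where "c = 2 / (d * (d + 1))"
  have "\<bar>psi d 1 t\<bar> \<le> 2 * \<bar>c\<bar>" if "0 \<le> t" "t \<le> 1" for t
  proof -
    have "t * t powr d \<le> 1"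
    proof (cases "t = 0")
      case False
      then have "t * t powr d = t powr (1 + d)"
        using that by (simp add: powr_mult_base)
      also have "\<dots> \<le> 1"
        using that assms by (intro powr_le1) auto
      finally show ?thesis .
    qed simp
    moreover have "0 \<le> t * t powr d"
      using that by simp
    ultimately have "\<bar>t * t powr d - t\<bar> \<le> 2"
      using that by linarith
    moreover have "psi d 1 t = c * (t * t powr d - t)"
      using False by (simp add: psi_def c_def algebra_simps)
    ultimately show ?thesis
      using mult_left_mono[of "\<bar>t * t powr d - t\<bar>" 2 "\<bar>c\<bar>"] by (simp add: abs_mult)
  qed
  then show thesis
    using that[of "2 * \<bar>c\<bar>"] by simp
qed

lemma powr_bounded_base_le:
  fixes s t e :: real
  assumes "1 / 2 \<le> s" "s \<le> 1 + t" "t \<ge> 0" "- real n \<le> e" "e \<le> real N"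
  shows "s powr e \<le> 2 ^ n * (1 + t) ^ N"
proof (cases "e \<ge> 0")
  case True
  have "s powr e \<le> (1 + t) powr e"
    using assms(1,2) True by (intro powr_mono2) auto
  also have "\<dots> \<le> (1 + t) powr real N"
    using assms(3,5) by (intro powr_mono) auto
  also have "\<dots> = (1 + t) ^ N"
    by (rule powr_realpow) (use assms(3) in simp)
  also have "\<dots> \<le> 2 ^ n * (1 + t) ^ N"
    using mult_right_mono[of 1 "2 ^ n" "(1 + t) ^ N"] assms(3) by simp
  finally show ?thesis .
next
  case False
  have "s powr e \<le> (1 / 2) powr e"
    using assms(1) False by (intro powr_mono2') auto
  also have "\<dots> = 2 powr (- e)"
    by (simp add: powr_divide powr_minus_divide)
  also have "\<dots> \<le> 2 powr real n"
    using assms(4) by (intro powr_mono) auto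
  also have "\<dots> \<le> 2 ^ n * (1 + t) ^ N"
    using mult_left_mono[of 1 "(1 + t) ^ N" "2 ^ n"] one_le_power[of "1 + t" N] assms(3)
    by (simp add: powr_realpow)
  finally show ?thesis .
qed

lemma psi1_taylor_lagrange:
  assumes "d > -1" "n \<ge> 2" "t \<ge> 1 / 2"
  shows "\<bar>psi d 1 t - psi_taylor d n t\<bar>
           \<le> \<bar>2 * (\<Prod>j<n - 2. d - 1 - real j)\<bar> / fact n * 2 ^ n * \<bar>t - 1\<bar> ^ n * (1 + t) ^ nat \<lceil>\<bar>d\<bar>\<rceil>"
    (is "_ \<le> \<bar>2 * ?P\<bar> / fact n * 2 ^ n * _ * (1 + t) ^ ?N")
proof (cases "t = 1")
  case True
  then have "psi_taylor d n t = psi d 1 1"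
    using assms(2) by (simp add: psi_taylor_def psi_deriv_0 zero_power sum.atLeast1_atMost_eq[symmetric]
        lessThan_atLeast0 sum.atLeast_Suc_lessThan)
  then show ?thesis
    using True by simp
next
  case False
  define e where "e = d + 1 - real n"
  obtain s where s: "if t < 1 then t < s \<and> s < 1 else 1 < s \<and> s < t"
    and taylor: "psi d 1 t = psi_taylor d n t + psi_deriv d n s / fact n * (t - 1) ^ n"
  proof -
    have "\<exists>s. (if t < 1 then t < s \<and> s < 1 else 1 < s \<and> s < t) \<and>
        psi d 1 t = (\<Sum>m<n. psi_deriv d m 1 / fact m * (t - 1) ^ m) + psi_deriv d n s / fact n * (t - 1) ^ n"
      using assms False psi_deriv_has_real_derivative[OF _ assms(1)]
      by (intro Taylor[of n "psi_deriv d" "psi d 1" "1 / 2" "t + 1"]) (auto simp: psi_deriv_0)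
    then show thesis
      using that unfolding psi_taylor_def by blast
  qed
  have "\<bar>d\<bar> \<le> real ?N"
    using le_of_int_ceiling[of "\<bar>d\<bar>"] by (simp add: of_nat_nat)
  then have "e \<le> real ?N"
    using assms(2) unfolding e_def by linarith
  have "s \<ge> 1 / 2" "s \<le> 1 + t"
    using s assms(3) by (auto split: if_splits)
  have "s powr e \<le> 2 ^ n * (1 + t) ^ ?N"
    using \<open>s \<ge> 1 / 2\<close> \<open>s \<le> 1 + t\<close> \<open>e \<le> real ?N\<close> assms
    by (intro powr_bounded_base_le) (auto simp: e_def)
  have "psi_deriv d n s = 2 * ?P * s powr e"
    using assms(2) by (simp add: psi_deriv_def e_def)
  then have "\<bar>psi d 1 t - psi_taylor d n t\<bar> = \<bar>2 * ?P\<bar> / fact n * \<bar>t - 1\<bar> ^ n * s powr e"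
    unfolding taylor by (simp add: abs_mult power_abs ac_simps)
  also have "\<dots> \<le> \<bar>2 * ?P\<bar> / fact n * \<bar>t - 1\<bar> ^ n * (2 ^ n * (1 + t) ^ ?N)"
    by (rule mult_left_mono[OF \<open>s powr e \<le> 2 ^ n * (1 + t) ^ ?N\<close>]) simp
  finally show ?thesis
    by (simp add: ac_simps)
qed

lemma psi1_taylor_remainder:
  assumes "d > -1" "n \<ge> 2"
  obtains K where "K \<ge> 0"
    "\<And>t. t \<ge> 0 \<Longrightarrow> \<bar>psi d 1 t - psi_taylor d n t\<bar> \<le> K * \<bar>t - 1\<bar> ^ n * (1 + t) ^ nat \<lceil>\<bar>d\<bar>\<rceil>"
proof -
  let ?N = "nat \<lceil>\<bar>d\<bar>\<rceil>"
  obtain B where "B \<ge> 0" and B: "\<And>t. 0 \<le> t \<Longrightarrow> t \<le> 1 \<Longrightarrow> \<bar>psi d 1 t\<bar> \<le> B"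
    using psi1_bounded_unit_interval[OF assms(1)] by blast
  define A where "A = (\<Sum>j<n. \<bar>psi_deriv d j 1\<bar> / fact j)"
  define L where "L = \<bar>2 * (\<Prod>j<n - 2. d - 1 - real j)\<bar> / fact n"
  have "A \<ge> 0" "L \<ge> 0"
    unfolding A_def L_def by (auto intro: sum_nonneg)
  have "\<bar>psi d 1 t - psi_taylor d n t\<bar> \<le> (L + A + B) * 2 ^ n * \<bar>t - 1\<bar> ^ n * (1 + t) ^ ?N"
    if "t \<ge> 0" for t
  proof (cases "t \<ge> 1 / 2")
    case True
    have "\<bar>psi d 1 t - psi_taylor d n t\<bar> \<le> L * 2 ^ n * \<bar>t - 1\<bar> ^ n * (1 + t) ^ ?N"
      using psi1_taylor_lagrange[OF assms True] by (simp add: L_def)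
    also have "\<dots> \<le> (L + A + B) * 2 ^ n * \<bar>t - 1\<bar> ^ n * (1 + t) ^ ?N"
      using \<open>A \<ge> 0\<close> \<open>B \<ge> 0\<close> that by (intro mult_right_mono) auto
    finally show ?thesis .
  next
    case False
    have "\<bar>t - 1\<bar> \<le> 1"
      using that False by simp
    then have "\<bar>psi_taylor d n t\<bar> \<le> A"
      unfolding psi_taylor_def A_def
      by (intro order_trans[OF sum_abs] sum_mono)
        (auto simp: abs_mult power_abs intro!: divide_right_mono mult_left_le power_le_one)
    then have "\<bar>psi d 1 t - psi_taylor d n t\<bar> \<le> (L + A + B) * 1"
      using B[of t] that False \<open>L \<ge> 0\<close> by simp
    also have "\<dots> \<le> (L + A + B) * (2 ^ n * \<bar>t - 1\<bar> ^ n * (1 + t) ^ ?N)"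
    proof (intro mult_left_mono)
      have "1 \<le> (2 * \<bar>t - 1\<bar>) ^ n"
        using False that by (intro one_le_power) auto
      moreover have "1 \<le> (1 + t) ^ ?N"
        using that by simp
      ultimately show "1 \<le> 2 ^ n * \<bar>t - 1\<bar> ^ n * (1 + t) ^ ?N"
        using mult_mono[of 1 "2 ^ n * \<bar>t - 1\<bar> ^ n" 1 "(1 + t) ^ ?N"] by (simp add: power_mult_distrib)
    qed (use \<open>A \<ge> 0\<close> \<open>B \<ge> 0\<close> \<open>L \<ge> 0\<close> in auto)
    finally show ?thesis
      by (simp add: mult.assoc)
  qed
  then show thesis
    using that[of "(L + A + B) * 2 ^ n"] \<open>A \<ge> 0\<close> \<open>B \<ge> 0\<close> \<open>L \<ge> 0\<close> by simp
qed

lemma psi_rescale: "l > 0 \<Longrightarrow> psi d l x = l * psi d 1 (x / l)"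
  unfolding psi_def by simp

lemma exp_bounded_psi:
  assumes "d > -1" "l > 0"
  shows "exp_bounded (psi d l)"
proof -
  obtain K where K: "\<And>t. t \<ge> 0 \<Longrightarrow> \<bar>psi d 1 t - psi_taylor d 2 t\<bar> \<le> K * \<bar>t - 1\<bar> ^ 2 * (1 + t) ^ nat \<lceil>\<bar>d\<bar>\<rceil>"
    using psi1_taylor_remainder[OF assms(1), of 2] by auto
  have "exp_bounded (\<lambda>t. \<bar>psi_taylor d 2 t\<bar> + K * \<bar>t - 1\<bar> ^ 2 * (1 + t) ^ nat \<lceil>\<bar>d\<bar>\<rceil>)"
    by (simp add: psi_taylor_def)
  then have "exp_bounded (psi d 1)"
    by (rule exp_bounded_dominated) (use K in force)
  then have "exp_bounded (\<lambda>x. l * psi d 1 (x / l))"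
    using assms(2) by (simp add: exp_bounded_rescale)
  moreover have "psi d l = (\<lambda>x. l * psi d 1 (x / l))"
    using psi_rescale[OF assms(2)] by (rule ext)
  ultimately show ?thesis
    by simp
qed

section \<open>Moments of the Taylor remainder\<close>

lemma exp_le_one_plus_quadratic:
  fixes s :: real
  assumes "\<bar>s\<bar> \<le> 1"
  shows "exp s \<le> 1 + s + 2 * s\<^sup>2"
proof -
  obtain u where "\<bar>u\<bar> \<le> \<bar>s\<bar>" and maclaurin: "exp s = (\<Sum>m<2. s ^ m / fact m) + exp u / fact 2 * s ^ 2"
    using Maclaurin_exp_le[of s 2] by blast
  have "exp u \<le> 3"
    using \<open>\<bar>u\<bar> \<le> \<bar>s\<bar>\<close> assms exp_le by (smt (verit) exp_le_cancel_iff)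
  then have "exp u / 2 * s\<^sup>2 \<le> 2 * s\<^sup>2"
    by (intro mult_right_mono) auto
  then show ?thesis
    using maclaurin by (simp add: numeral_2_eq_2)
qed

lemma pois_E_exp_centered_le:
  assumes "l > 0" "\<bar>s\<bar> \<le> 1"
  shows "pois_E l (\<lambda>x. exp (s * (x - l))) \<le> exp (2 * l * s\<^sup>2)"
proof -
  have "pois_E l (\<lambda>x. exp (s * (x - l))) = pois_E l (\<lambda>x. exp (- s * l) * exp (s * x))"
    by (intro pois_E_cong) (simp add: exp_add[symmetric] algebra_simps)
  also have "\<dots> = exp (- s * l) * exp (l * (exp s - 1))"
    using assms(1) by (simp only: pois_E_cmult pois_E_exp)
  also have "\<dots> = exp (l * (exp s - 1 - s))"
    by (simp add: exp_add[symmetric] algebra_simps)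
  also have "\<dots> \<le> exp (2 * l * s\<^sup>2)"
    using exp_le_one_plus_quadratic[OF assms(2)] assms(1) by (simp add: mult_left_mono)
  finally show ?thesis .
qed

lemma power_le_fact_mult_exp:
  fixes z :: real
  assumes "z \<ge> 0"
  shows "z ^ m \<le> fact m * exp z"
proof -
  obtain u where "exp z = (\<Sum>k<Suc m. z ^ k / fact k) + exp u / fact (Suc m) * z ^ Suc m"
    using Maclaurin_exp_le[of z "Suc m"] by blast
  moreover have "z ^ m / fact m \<le> (\<Sum>k<Suc m. z ^ k / fact k)"
    using assms by (intro member_le_sum) auto
  ultimately have "z ^ m / fact m \<le> exp z"
    using assms by (smt (verit) divide_nonneg_nonneg exp_gt_zero fact_ge_zero mult_nonneg_nonneg
        zero_le_power)
  then show ?thesis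
    by (simp add: field_simps)
qed

lemma pois_E_exp_standardized_le:
  assumes "l \<ge> 1"
  shows "pois_E l (\<lambda>x. exp (1 / sqrt l * (x - l)) + exp (- 1 / sqrt l * (x - l))) \<le> 2 * exp 2"
proof -
  have "l > 0"
    using assms by simp
  then have "pois_E l (\<lambda>x. exp (1 / sqrt l * (x - l)) + exp (- 1 / sqrt l * (x - l)))
      = pois_E l (\<lambda>x. exp (1 / sqrt l * (x - l))) + pois_E l (\<lambda>x. exp (- 1 / sqrt l * (x - l)))"
    by (intro pois_E_add exp_bounded_exp_centered)
  also have "\<dots> \<le> exp (2 * l * (1 / sqrt l)\<^sup>2) + exp (2 * l * (- 1 / sqrt l)\<^sup>2)"
    using assms by (intro add_mono pois_E_exp_centered_le) auto
  also have "\<dots> = 2 * exp 2"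
    using \<open>l > 0\<close> by (simp add: power_divide)
  finally show ?thesis .
qed

lemma relative_deviation_le_standardized:
  assumes "l \<ge> 1" "x \<ge> 0"
  shows "\<bar>x / l - 1\<bar> \<le> (2 + \<bar>(x - l) / sqrt l\<bar>) / sqrt l" "1 + x / l \<le> 2 + \<bar>(x - l) / sqrt l\<bar>"
proof -
  define y where "y = (x - l) / sqrt l"
  have "sqrt l \<ge> 1"
    using assms(1) by simp
  have "sqrt l * sqrt l = l"
    using assms(1) by simp
  then have "x / l - 1 = y / sqrt l"
    using assms(1) unfolding y_def by (simp add: field_simps)
  moreover have "y / sqrt l \<le> \<bar>y\<bar> / sqrt l" "\<bar>y\<bar> / sqrt l \<le> \<bar>y\<bar>"
    using \<open>sqrt l \<ge> 1\<close> by (simp_all add: divide_right_mono divide_le_eq mult_le_cancel_left1)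
  ultimately show "1 + x / l \<le> 2 + \<bar>(x - l) / sqrt l\<bar>"
    unfolding y_def by linarith
  have "\<bar>x / l - 1\<bar> = \<bar>y\<bar> / sqrt l"
    using \<open>x / l - 1 = y / sqrt l\<close> \<open>sqrt l \<ge> 1\<close> by (simp add: abs_div)
  also have "\<dots> \<le> (2 + \<bar>y\<bar>) / sqrt l"
    using \<open>sqrt l \<ge> 1\<close> by (intro divide_right_mono) auto
  finally show "\<bar>x / l - 1\<bar> \<le> (2 + \<bar>(x - l) / sqrt l\<bar>) / sqrt l"
    unfolding y_def .
qed

lemma sq_le_exp_standardized:
  fixes l x u K :: real
  assumes "l \<ge> 1" "x \<ge> 0" "K \<ge> 0" "\<bar>u\<bar> \<le> K * \<bar>x / l - 1\<bar> ^ n * (1 + x / l) ^ N"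
  shows "u\<^sup>2 \<le> K\<^sup>2 * fact (2 * n + 2 * N) * exp 2 / l ^ n
                * (exp (1 / sqrt l * (x - l)) + exp (- 1 / sqrt l * (x - l)))"
proof -
  define y where "y = (x - l) / sqrt l"
  define z where "z = 2 + \<bar>y\<bar>"
  have "z \<ge> 1"
    by (simp add: z_def)
  note assms(4)
  also have "K * \<bar>x / l - 1\<bar> ^ n * (1 + x / l) ^ N \<le> K * (z / sqrt l) ^ n * z ^ N"
    using relative_deviation_le_standardized[OF assms(1,2)] assms(1-3)
    unfolding z_def y_def by (intro mult_mono mult_left_mono power_mono) auto
  also have "\<dots> = K * z ^ (n + N) / sqrt l ^ n"
    by (simp add: power_divide power_add)
  finally have "u\<^sup>2 \<le> (K * z ^ (n + N) / sqrt l ^ n)\<^sup>2"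
    by (metis abs_ge_zero power2_abs power_mono)
  also have "\<dots> = K\<^sup>2 * z ^ (2 * n + 2 * N) / l ^ n"
  proof -
    have "(sqrt l ^ n)\<^sup>2 = (sqrt l)\<^sup>2 ^ n"
      by (metis power_mult mult.commute)
    then have "(sqrt l ^ n)\<^sup>2 = l ^ n"
      using assms(1) by simp
    then show ?thesis
      by (simp add: power_divide power_mult_distrib mult.commute flip: power_mult)
  qed
  also have "\<dots> \<le> K\<^sup>2 * (fact (2 * n + 2 * N) * exp z) / l ^ n"
    using \<open>z \<ge> 1\<close> assms(1) by (intro divide_right_mono mult_left_mono power_le_fact_mult_exp) auto
  also have "\<dots> \<le> K\<^sup>2 * (fact (2 * n + 2 * N) * (exp 2 * (exp y + exp (- y)))) / l ^ n"
  proof -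
    have "exp \<bar>y\<bar> \<le> exp y + exp (- y)"
      using exp_gt_zero[of y] exp_gt_zero[of "- y"] by (cases "y \<ge> 0") simp_all
    then have "exp z \<le> exp 2 * (exp y + exp (- y))"
      unfolding z_def by (simp add: exp_add)
    then show ?thesis
      using assms(1) by (intro divide_right_mono mult_left_mono) auto
  qed
  finally show ?thesis
    by (simp add: y_def field_simps)
qed

lemma pois_E_sq_psi_taylor_error:
  assumes "d > -1" "n \<ge> 2"
  obtains M where "M \<ge> 0"
    "\<And>l. l \<ge> 1 \<Longrightarrow> pois_E l (\<lambda>x. (psi d l x - l * psi_taylor d n (x / l))\<^sup>2) \<le> M * l\<^sup>2 / l ^ n"
proof -
  let ?N = "nat \<lceil>\<bar>d\<bar>\<rceil>"
  obtain K where "K \<ge> 0" and K: "\<And>t. t \<ge> 0 \<Longrightarrow> \<bar>psi d 1 t - psi_taylor d n t\<bar> \<le> K * \<bar>t - 1\<bar> ^ n * (1 + t) ^ ?N"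
    using psi1_taylor_remainder[OF assms] by blast
  define C where "C = K\<^sup>2 * fact (2 * n + 2 * ?N) * exp 2"
  have "C \<ge> 0"
    by (simp add: C_def)
  have "pois_E l (\<lambda>x. (psi d l x - l * psi_taylor d n (x / l))\<^sup>2) \<le> (2 * exp 2 * C) * l\<^sup>2 / l ^ n"
    if "l \<ge> 1" for l
  proof -
    define E where "E x = exp (1 / sqrt l * (x - l)) + exp (- 1 / sqrt l * (x - l))" for x
    have "l > 0"
      using that by simp
    have "(psi d l x - l * psi_taylor d n (x / l))\<^sup>2 \<le> l\<^sup>2 * C / l ^ n * E x" if "x \<ge> 0" for x
    proof -
      have "(psi d l x - l * psi_taylor d n (x / l))\<^sup>2 = l\<^sup>2 * (psi d 1 (x / l) - psi_taylor d n (x / l))\<^sup>2"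
        using \<open>l > 0\<close> by (simp add: psi_rescale[of l d x] power2_eq_square algebra_simps del: psi_def)
      also have "\<dots> \<le> l\<^sup>2 * (C / l ^ n * E x)"
        using sq_le_exp_standardized[OF \<open>l \<ge> 1\<close> that \<open>K \<ge> 0\<close> K] \<open>l > 0\<close> that
        by (intro mult_left_mono) (simp_all add: C_def E_def)
      finally show ?thesis
        by simp
    qed
    moreover have "exp_bounded E"
      unfolding E_def by (intro exp_bounded_add exp_bounded_exp_centered)
    ultimately have "pois_E l (\<lambda>x. (psi d l x - l * psi_taylor d n (x / l))\<^sup>2) \<le> l\<^sup>2 * C / l ^ n * pois_E l E"
      using \<open>l > 0\<close> exp_bounded_psi[OF assms(1) \<open>l > 0\<close>]
      by (subst pois_E_cmult[symmetric], intro pois_E_mono) (simp_all add: psi_taylor_def)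
    also have "\<dots> \<le> l\<^sup>2 * C / l ^ n * (2 * exp 2)"
      using pois_E_exp_standardized_le[OF that] \<open>C \<ge> 0\<close> \<open>l > 0\<close> unfolding E_def
      by (intro mult_left_mono) simp_all
    finally show ?thesis
      by (simp add: ac_simps)
  qed
  then show thesis
    using that[of "2 * exp 2 * C"] \<open>C \<ge> 0\<close> by simp
qed

section \<open>Estimates for the power divergence\<close>

lemma pois_E_centered_moments:
  assumes "l > 0"
  shows "pois_E l (\<lambda>x. x - l) = 0" "pois_E l (\<lambda>x. (x - l)\<^sup>2) = l"
  using pois_E_ident[OF assms] pois_E_charlier_mult_charlier[OF assms, of 1 1] assms
  by (simp_all add: pois_E_diff power2_eq_square)

lemma pois_E_fwd_diff_quartic:
  fixes b0 b1 b2 b3 b4 :: real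
  assumes "l > 0"
  defines "p \<equiv> \<lambda>x. b0 + b1 * (x - l) + b2 * (x - l)\<^sup>2 + b3 * (x - l) ^ 3 + b4 * (x - l) ^ 4"
  shows "pois_E l ((fwd_diff ^^ 2) p) = 2 * b2 + 6 * b3 + 14 * b4 + 12 * b4 * l"
    and "pois_E l ((fwd_diff ^^ 3) p) = 6 * b3 + 36 * b4"
proof -
  have "(fwd_diff ^^ 2) p = (\<lambda>x. (2 * b2 + 6 * b3 + 14 * b4) + (6 * b3 + 24 * b4) * (x - l) + 12 * b4 * (x - l)\<^sup>2)"
    by (simp add: p_def numeral_2_eq_2 fwd_diff_def fun_eq_iff power2_eq_square power3_eq_cube
        power4_eq_xxxx algebra_simps)
  then show "pois_E l ((fwd_diff ^^ 2) p) = 2 * b2 + 6 * b3 + 14 * b4 + 12 * b4 * l"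
    using assms(1) by (simp add: pois_E_linear pois_E_ident pois_E_centered_moments)
  have "(fwd_diff ^^ 3) p = (\<lambda>x. (6 * b3 + 36 * b4) + 24 * b4 * (x - l))"
    by (simp add: p_def numeral_3_eq_3 fwd_diff_def fun_eq_iff power2_eq_square power3_eq_cube
        power4_eq_xxxx algebra_simps)
  then show "pois_E l ((fwd_diff ^^ 3) p) = 6 * b3 + 36 * b4"
    using assms(1) by (simp add: pois_E_linear pois_E_ident pois_E_centered_moments)
qed

lemma psi_taylor_rescale:
  assumes "l > 0"
  shows "l * psi_taylor d n (x / l) = (\<Sum>j<n. l * psi_deriv d j 1 / (fact j * l ^ j) * (x - l) ^ j)"
proof -
  have "x / l - 1 = (x - l) / l"
    using assms by (simp add: field_simps)
  then show ?thesis
    unfolding psi_taylor_def by (simp add: sum_distrib_left power_divide field_simps)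
qed

lemma pois_E_fwd_diff_psi_taylor:
  assumes "l > 0"
  shows "pois_E l ((fwd_diff ^^ 2) (\<lambda>x. l * psi_taylor d 5 (x / l)))
           = 2 / l + d * (d - 1) / l\<^sup>2 + 7 * ((d - 1) * (d - 2)) / (6 * l ^ 3)"
    and "pois_E l ((fwd_diff ^^ 3) (\<lambda>x. l * psi_taylor d 5 (x / l)))
           = 2 * (d - 1) / l\<^sup>2 + 3 * ((d - 1) * (d - 2)) / l ^ 3"
proof -
  define b where "b j = l * psi_deriv d j 1 / (fact j * l ^ j)" for j
  have quartic: "(\<lambda>x. l * psi_taylor d 5 (x / l))
      = (\<lambda>x. b 0 + b 1 * (x - l) + b 2 * (x - l)\<^sup>2 + b 3 * (x - l) ^ 3 + b 4 * (x - l) ^ 4)"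
    using assms by (simp add: psi_taylor_rescale b_def fun_eq_iff eval_nat_numeral)
  have coeffs: "b 2 = 1 / l" "b 3 = (d - 1) / (3 * l\<^sup>2)" "b 4 = (d - 1) * (d - 2) / (12 * l ^ 3)"
    using assms psi_deriv_at_1[of d] by (simp_all add: b_def eval_nat_numeral field_simps)
  show "pois_E l ((fwd_diff ^^ 2) (\<lambda>x. l * psi_taylor d 5 (x / l)))
           = 2 / l + d * (d - 1) / l\<^sup>2 + 7 * ((d - 1) * (d - 2)) / (6 * l ^ 3)"
    and "pois_E l ((fwd_diff ^^ 3) (\<lambda>x. l * psi_taylor d 5 (x / l)))
           = 2 * (d - 1) / l\<^sup>2 + 3 * ((d - 1) * (d - 2)) / l ^ 3"
    unfolding quartic pois_E_fwd_diff_quartic[OF assms] coeffs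
    using assms by (simp_all add: field_simps power2_eq_square power3_eq_cube)
qed

text \<open>\<open>E[(h - p) C\<^sub>k]\<close> is \<open>l\<^sup>k\<close> times the difference, and weighted AM-GM with weight \<open>l\<^sup>k\<close> bounds it.\<close>

lemma pois_E_fwd_diff_iter_perturb:
  assumes "l > 0" "exp_bounded h" "exp_bounded p"
  shows "\<bar>pois_E l ((fwd_diff ^^ k) h) - pois_E l ((fwd_diff ^^ k) p)\<bar>
           \<le> (l ^ k * pois_E l (\<lambda>x. (h x - p x)\<^sup>2) + fact k) / (2 * l ^ k)"
proof -
  have "l ^ k * (pois_E l ((fwd_diff ^^ k) h) - pois_E l ((fwd_diff ^^ k) p))
      = pois_E l (\<lambda>x. (h x - p x) * charlier k l x)"
    using assms by (simp add: left_diff_distrib right_diff_distrib pois_E_diff pois_E_mult_charlier)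
  also have "\<bar>\<dots>\<bar> \<le> (l ^ k * pois_E l (\<lambda>x. (h x - p x)\<^sup>2) + pois_E l (\<lambda>x. (charlier k l x)\<^sup>2) / l ^ k) / 2"
    using assms by (intro pois_E_mult_abs_le) simp_all
  also have "pois_E l (\<lambda>x. (charlier k l x)\<^sup>2) = fact k * l ^ k"
    using pois_E_charlier_mult_charlier[OF assms(1), of k k] by (simp add: power2_eq_square)
  finally have "l ^ k * \<bar>pois_E l ((fwd_diff ^^ k) h) - pois_E l ((fwd_diff ^^ k) p)\<bar>
      \<le> (l ^ k * pois_E l (\<lambda>x. (h x - p x)\<^sup>2) + fact k) / 2"
    using assms(1) by (simp add: abs_mult)
  then show ?thesis
    using assms(1) by (simp add: field_simps)
qed

lemma pois_E_fwd_diff_psi_near_taylor: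
  assumes "d > -1" "k \<le> 3"
  obtains A where "A \<ge> 0"
    "\<And>l. l \<ge> 1 \<Longrightarrow> \<bar>pois_E l ((fwd_diff ^^ k) (psi d l))
                          - pois_E l ((fwd_diff ^^ k) (\<lambda>x. l * psi_taylor d 5 (x / l)))\<bar> \<le> A / l ^ k"
proof -
  obtain M where "M \<ge> 0"
    and M: "\<And>l. l \<ge> 1 \<Longrightarrow> pois_E l (\<lambda>x. (psi d l x - l * psi_taylor d 5 (x / l))\<^sup>2) \<le> M * l\<^sup>2 / l ^ 5"
    using pois_E_sq_psi_taylor_error[OF assms(1), of 5] by auto
  have "\<bar>pois_E l ((fwd_diff ^^ k) (psi d l)) - pois_E l ((fwd_diff ^^ k) (\<lambda>x. l * psi_taylor d 5 (x / l)))\<bar>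
      \<le> (M + fact k) / 2 / l ^ k" if "l \<ge> 1" for l
  proof -
    have "l > 0"
      using that by simp
    have "l ^ k * (M * l\<^sup>2 / l ^ 5) = M * (l ^ k / l ^ 3)"
      using \<open>l > 0\<close> by (simp add: field_simps eval_nat_numeral)
    also have "\<dots> \<le> M"
    proof -
      have "l ^ k \<le> l ^ 3"
        using that assms(2) by (intro power_increasing) auto
      then have "l ^ k / l ^ 3 \<le> 1"
        using \<open>l > 0\<close> by simp
      then show ?thesis
        using \<open>M \<ge> 0\<close> by (rule mult_left_le)
    qed
    finally have "l ^ k * pois_E l (\<lambda>x. (psi d l x - l * psi_taylor d 5 (x / l))\<^sup>2) \<le> M"
      using M[OF that] \<open>l > 0\<close> by (smt (verit) mult_left_mono zero_less_power)
    then show ?thesis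
      using pois_E_fwd_diff_iter_perturb[OF \<open>l > 0\<close> exp_bounded_psi[OF assms(1) \<open>l > 0\<close>],
          of "\<lambda>x. l * psi_taylor d 5 (x / l)" k] \<open>l > 0\<close>
      by (simp add: psi_taylor_def divide_right_mono field_simps)
  qed
  with that[of "(M + fact k) / 2"] \<open>M \<ge> 0\<close> show thesis
    by simp
qed

lemma pois_E_fwd_diff2_psi:
  assumes "d > -1"
  obtains A where "A \<ge> 0" "\<And>l. l \<ge> 1 \<Longrightarrow> \<bar>pois_E l ((fwd_diff ^^ 2) (psi d l)) - 2 / l\<bar> \<le> A / l\<^sup>2"
proof -
  obtain A0 where "A0 \<ge> 0" and A0: "\<And>l. l \<ge> 1 \<Longrightarrow> \<bar>pois_E l ((fwd_diff ^^ 2) (psi d l))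
      - pois_E l ((fwd_diff ^^ 2) (\<lambda>x. l * psi_taylor d 5 (x / l)))\<bar> \<le> A0 / l\<^sup>2"
    using pois_E_fwd_diff_psi_near_taylor[OF assms, of 2] by auto
  define A where "A = A0 + \<bar>d * (d - 1)\<bar> + 7 * \<bar>(d - 1) * (d - 2)\<bar> / 6"
  have "\<bar>pois_E l ((fwd_diff ^^ 2) (psi d l)) - 2 / l\<bar> \<le> A / l\<^sup>2" if "l \<ge> 1" for l
  proof -
    have "l > 0"
      using that by simp
    have "\<bar>7 * ((d - 1) * (d - 2)) / (6 * l ^ 3)\<bar> = 7 * \<bar>(d - 1) * (d - 2)\<bar> / (6 * l ^ 3)"
      using \<open>l > 0\<close> by (simp add: abs_mult)
    also have "\<dots> \<le> 7 * \<bar>(d - 1) * (d - 2)\<bar> / (6 * l\<^sup>2)"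
      using that by (intro divide_left_mono) (auto simp: power_increasing)
    finally have "\<bar>7 * ((d - 1) * (d - 2)) / (6 * l ^ 3)\<bar> \<le> 7 * \<bar>(d - 1) * (d - 2)\<bar> / 6 / l\<^sup>2"
      by simp
    moreover have "\<bar>d * (d - 1) / l\<^sup>2\<bar> = \<bar>d * (d - 1)\<bar> / l\<^sup>2"
      by simp
    moreover have "A / l\<^sup>2 = A0 / l\<^sup>2 + \<bar>d * (d - 1)\<bar> / l\<^sup>2 + 7 * \<bar>(d - 1) * (d - 2)\<bar> / 6 / l\<^sup>2"
      by (simp add: A_def add_divide_distrib)
    ultimately show ?thesis
      using A0[OF that] pois_E_fwd_diff_psi_taylor(1)[OF \<open>l > 0\<close>, of d] by linarith
  qed
  then show thesis
    using that[of A] \<open>A0 \<ge> 0\<close> by (simp add: A_def)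
qed

lemma pois_E_fwd_diff3_psi:
  assumes "d > -1"
  obtains A where "A \<ge> 0" "\<And>l. l \<ge> 1 \<Longrightarrow> \<bar>pois_E l ((fwd_diff ^^ 3) (psi d l)) - 2 * (d - 1) / l\<^sup>2\<bar> \<le> A / l ^ 3"
proof -
  obtain A0 where "A0 \<ge> 0" and A0: "\<And>l. l \<ge> 1 \<Longrightarrow> \<bar>pois_E l ((fwd_diff ^^ 3) (psi d l))
      - pois_E l ((fwd_diff ^^ 3) (\<lambda>x. l * psi_taylor d 5 (x / l)))\<bar> \<le> A0 / l ^ 3"
    using pois_E_fwd_diff_psi_near_taylor[OF assms, of 3] by auto
  define A where "A = A0 + 3 * \<bar>(d - 1) * (d - 2)\<bar>"
  have "\<bar>pois_E l ((fwd_diff ^^ 3) (psi d l)) - 2 * (d - 1) / l\<^sup>2\<bar> \<le> A / l ^ 3" if "l \<ge> 1" for l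
  proof -
    have "l > 0"
      using that by simp
    have "\<bar>3 * ((d - 1) * (d - 2)) / l ^ 3\<bar> = 3 * \<bar>(d - 1) * (d - 2)\<bar> / l ^ 3"
      using \<open>l > 0\<close> by (simp add: abs_mult)
    moreover have "A / l ^ 3 = A0 / l ^ 3 + 3 * \<bar>(d - 1) * (d - 2)\<bar> / l ^ 3"
      by (simp add: A_def add_divide_distrib)
    ultimately show ?thesis
      using A0[OF that] pois_E_fwd_diff_psi_taylor(2)[OF \<open>l > 0\<close>, of d] by linarith
  qed
  then show thesis
    using that[of A] \<open>A0 \<ge> 0\<close> by (simp add: A_def)
qed

lemma pois_E_sq_psi_residual:
  assumes "d > -1"
  obtains A where "A \<ge> 0"
    "\<And>l. l \<ge> 1 \<Longrightarrow> pois_E l (\<lambda>x. (psi d l x - charlier_proj 3 l (psi d l) x)\<^sup>2) \<le> A / l\<^sup>2"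
proof -
  obtain M where "M \<ge> 0"
    and M: "\<And>l. l \<ge> 1 \<Longrightarrow> pois_E l (\<lambda>x. (psi d l x - l * psi_taylor d 4 (x / l))\<^sup>2) \<le> M * l\<^sup>2 / l ^ 4"
    using pois_E_sq_psi_taylor_error[OF assms, of 4] by auto
  have "pois_E l (\<lambda>x. (psi d l x - charlier_proj 3 l (psi d l) x)\<^sup>2) \<le> M / l\<^sup>2" if "l \<ge> 1" for l
  proof -
    have "l > 0"
      using that by simp
    have "l * psi_taylor d 4 (x / l) = l * psi_deriv d 0 1 + psi_deriv d 1 1 * (x - l)
        + psi_deriv d 2 1 / (2 * l) * (x - l)\<^sup>2 + psi_deriv d 3 1 / (6 * l\<^sup>2) * (x - l) ^ 3" for x
      unfolding psi_taylor_rescale[OF \<open>l > 0\<close>] using \<open>l > 0\<close> by (simp add: eval_nat_numeral field_simps)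
    moreover obtain b where "\<forall>x. l * psi_deriv d 0 1 + psi_deriv d 1 1 * (x - l)
        + psi_deriv d 2 1 / (2 * l) * (x - l)\<^sup>2 + psi_deriv d 3 1 / (6 * l\<^sup>2) * (x - l) ^ 3
        = (\<Sum>k\<le>3. b k * charlier k l x)"
      using cubic_eq_charlier_comb by blast
    ultimately have cubic: "\<And>x. l * psi_taylor d 4 (x / l) = (\<Sum>k\<le>3. b k * charlier k l x)"
      by simp
    have "pois_E l (\<lambda>x. (psi d l x - charlier_proj 3 l (psi d l) x)\<^sup>2)
        \<le> pois_E l (\<lambda>x. (psi d l x - l * psi_taylor d 4 (x / l))\<^sup>2)"
      unfolding cubic by (rule pois_E_sq_residual_le[OF \<open>l > 0\<close> exp_bounded_psi[OF assms \<open>l > 0\<close>]])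
    also have "\<dots> \<le> M * l\<^sup>2 / l ^ 4"
      by (rule M[OF that])
    also have "\<dots> = M / l\<^sup>2"
      using \<open>l > 0\<close> by (simp add: eval_nat_numeral field_simps)
    finally show ?thesis .
  qed
  then show thesis
    using that \<open>M \<ge> 0\<close> by blast
qed

section \<open>Asymptotics of the correlation\<close>

lemma inv_sqrt_one_plus_approx:
  fixes w :: real
  assumes "w \<ge> 0"
  shows "\<bar>1 / sqrt (1 + w) - (1 - w / 2)\<bar> \<le> w\<^sup>2"
proof -
  define s where "s = sqrt (1 + w)"
  have "s \<ge> 1" "w = s\<^sup>2 - 1"
    using assms by (simp_all add: s_def)
  have expansion: "1 / s - (1 - w / 2) = (s - 1)\<^sup>2 * ((s + 2) / (2 * s))"
    using \<open>s \<ge> 1\<close> unfolding \<open>w = s\<^sup>2 - 1\<close> by (simp add: field_simps power2_eq_square)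
  have "(s + 2) / (2 * s) \<le> (s + 1)\<^sup>2"
  proof -
    have "(s + 2) / (2 * s) \<le> 3 / 2"
      using \<open>s \<ge> 1\<close> by (simp add: divide_le_eq)
    moreover have "4 \<le> (s + 1)\<^sup>2"
      using power_mono[of 2 "s + 1" 2] \<open>s \<ge> 1\<close> by simp
    ultimately show ?thesis
      by linarith
  qed
  then have "(s - 1)\<^sup>2 * ((s + 2) / (2 * s)) \<le> (s - 1)\<^sup>2 * (s + 1)\<^sup>2"
    by (intro mult_left_mono) auto
  also have "\<dots> = w\<^sup>2"
    unfolding \<open>w = s\<^sup>2 - 1\<close> by (simp add: power2_eq_square algebra_simps)
  finally show ?thesis
    using \<open>s \<ge> 1\<close> by (simp add: s_def[symmetric] expansion)
qed

lemma variance_ratio_eq_inv_sqrt: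
  fixes l d2 d3 R :: real
  assumes "l > 0" "d2 > 0" "R \<ge> 0"
  shows "l\<^sup>2 * d2 / sqrt ((l\<^sup>2 * d2\<^sup>2 / 2 + l ^ 3 * d3\<^sup>2 / 6 + R) * (2 * l\<^sup>2))
           = 1 / sqrt (1 + ((l\<^sup>2 * d3)\<^sup>2 / (3 * l) + 2 * R) / (l * d2)\<^sup>2)"
proof -
  define w where "w = ((l\<^sup>2 * d3)\<^sup>2 / (3 * l) + 2 * R) / (l * d2)\<^sup>2"
  have "w \<ge> 0"
    using assms by (simp add: w_def)
  have "(l\<^sup>2 * d2\<^sup>2 / 2 + l ^ 3 * d3\<^sup>2 / 6 + R) * (2 * l\<^sup>2) = (l\<^sup>2 * d2)\<^sup>2 * (1 + w)"
    using assms by (simp add: w_def field_simps power2_eq_square power3_eq_cube)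
  then have "sqrt ((l\<^sup>2 * d2\<^sup>2 / 2 + l ^ 3 * d3\<^sup>2 / 6 + R) * (2 * l\<^sup>2)) = l\<^sup>2 * d2 * sqrt (1 + w)"
    using assms by (simp add: real_sqrt_mult)
  then show ?thesis
    using assms \<open>w \<ge> 0\<close> by (simp add: w_def)
qed

text \<open>\<open>P\<close>, \<open>Q\<close> and \<open>R\<close> stand for \<open>l E[\<Delta>\<^sup>2 h]\<close>, \<open>l\<^sup>2 E[\<Delta>\<^sup>3 h]\<close> and the residual \<open>E[W\<^sup>2]\<close>.\<close>

context
  fixes l A a P Q R :: real
  assumes A_nonneg: "A \<ge> 0" and l_ge_1: "l \<ge> 1" and l_ge_A: "2 * A \<le> l"
    and P_approx: "\<bar>P - 2\<bar> \<le> A / l" and Q_approx: "\<bar>Q - 2 * a\<bar> \<le> A / l"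
    and R_nonneg: "R \<ge> 0" and R_le: "R \<le> A / l\<^sup>2"
begin

lemma perturbed_bounds: "3 / 2 \<le> P" "P \<le> 5 / 2" "1 \<le> P\<^sup>2" "\<bar>Q\<bar> \<le> 2 * \<bar>a\<bar> + A" "R \<le> A / l"
proof -
  have "A / l \<le> 1 / 2" "A / l \<le> A"
    using l_ge_1 l_ge_A A_nonneg by (simp_all add: divide_le_eq mult_le_cancel_left1)
  then show "3 / 2 \<le> P" "P \<le> 5 / 2" "\<bar>Q\<bar> \<le> 2 * \<bar>a\<bar> + A"
    using P_approx Q_approx by linarith+
  then show "1 \<le> P\<^sup>2"
    using power_mono[of 1 P 2] by simp
  have "A / l\<^sup>2 \<le> A / l"
    using l_ge_1 A_nonneg by (intro divide_left_mono) (auto simp: power2_eq_square)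
  then show "R \<le> A / l"
    using R_le by linarith
qed

lemma perturbed_ratio_le: "(Q\<^sup>2 / (3 * l) + 2 * R) / P\<^sup>2 \<le> ((2 * \<bar>a\<bar> + A)\<^sup>2 / 3 + 2 * A) / l"
proof -
  have "Q\<^sup>2 \<le> (2 * \<bar>a\<bar> + A)\<^sup>2"
    using perturbed_bounds(4) by (metis abs_ge_zero power2_abs power_mono)
  then have "Q\<^sup>2 / (3 * l) \<le> (2 * \<bar>a\<bar> + A)\<^sup>2 / (3 * l)"
    using l_ge_1 by (intro divide_right_mono) auto
  moreover have "((2 * \<bar>a\<bar> + A)\<^sup>2 / 3 + 2 * A) / l = (2 * \<bar>a\<bar> + A)\<^sup>2 / (3 * l) + 2 * A / l"
    by (simp add: add_divide_distrib)
  ultimately have "Q\<^sup>2 / (3 * l) + 2 * R \<le> ((2 * \<bar>a\<bar> + A)\<^sup>2 / 3 + 2 * A) / l"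
    using perturbed_bounds(5) by simp
  moreover have "0 \<le> Q\<^sup>2 / (3 * l) + 2 * R"
    using R_nonneg l_ge_1 by simp
  then have "(Q\<^sup>2 / (3 * l) + 2 * R) / P\<^sup>2 \<le> Q\<^sup>2 / (3 * l) + 2 * R"
    using perturbed_bounds(3) by (simp add: divide_le_eq mult_le_cancel_left1)
  ultimately show ?thesis
    by linarith
qed

lemma perturbed_ratio_approx:
  "\<bar>(Q\<^sup>2 / (3 * l) + 2 * R) / P\<^sup>2 - a\<^sup>2 / (3 * l)\<bar> \<le> ((1 + \<bar>a\<bar>) * A * (5 * \<bar>a\<bar> + A) / 3 + 2 * A) / l\<^sup>2"
proof -
  have "P > 0"
    using perturbed_bounds(1) by simp
  have "\<bar>Q - a * P\<bar> \<le> (1 + \<bar>a\<bar>) * A / l"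
  proof -
    have "Q - a * P = (Q - 2 * a) - a * (P - 2)"
      by (simp add: algebra_simps)
    then have "\<bar>Q - a * P\<bar> \<le> \<bar>Q - 2 * a\<bar> + \<bar>a\<bar> * \<bar>P - 2\<bar>"
      by (simp add: abs_mult[symmetric] abs_triangle_ineq4)
    also have "\<dots> \<le> A / l + \<bar>a\<bar> * (A / l)"
      using Q_approx P_approx by (intro add_mono mult_left_mono) auto
    finally show ?thesis
      by (simp add: algebra_simps add_divide_distrib)
  qed
  moreover have "\<bar>Q + a * P\<bar> \<le> 5 * \<bar>a\<bar> + A"
  proof -
    have "\<bar>a * P\<bar> \<le> \<bar>a\<bar> * 3"
      using perturbed_bounds(1,2) by (simp add: abs_mult mult_left_mono)
    then show ?thesis
      using perturbed_bounds(4) by linarith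
  qed
  ultimately have "\<bar>Q - a * P\<bar> * \<bar>Q + a * P\<bar> \<le> (1 + \<bar>a\<bar>) * A / l * (5 * \<bar>a\<bar> + A)"
    by (intro mult_mono) auto
  moreover have "\<bar>Q\<^sup>2 - a\<^sup>2 * P\<^sup>2\<bar> = \<bar>Q - a * P\<bar> * \<bar>Q + a * P\<bar>"
    by (simp add: abs_mult[symmetric] power2_eq_square algebra_simps)
  ultimately have "\<bar>Q\<^sup>2 - a\<^sup>2 * P\<^sup>2\<bar> / (3 * l * P\<^sup>2) \<le> (1 + \<bar>a\<bar>) * A / l * (5 * \<bar>a\<bar> + A) / (3 * l)"
    using perturbed_bounds(3) l_ge_1
    by (intro frac_le) (auto simp: mult_le_cancel_left1)
  then have first: "\<bar>(Q\<^sup>2 - a\<^sup>2 * P\<^sup>2) / (3 * l * P\<^sup>2)\<bar> \<le> (1 + \<bar>a\<bar>) * A * (5 * \<bar>a\<bar> + A) / 3 / l\<^sup>2"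
    using l_ge_1 \<open>P > 0\<close> by (simp add: abs_divide abs_mult power2_eq_square)
  have "2 * R / P\<^sup>2 \<le> 2 * R"
    using perturbed_bounds(3) R_nonneg by (simp add: divide_le_eq mult_le_cancel_left1)
  then have second: "\<bar>2 * R / P\<^sup>2\<bar> \<le> 2 * A / l\<^sup>2"
    using R_nonneg R_le by simp
  have "(Q\<^sup>2 / (3 * l) + 2 * R) / P\<^sup>2 - a\<^sup>2 / (3 * l) = (Q\<^sup>2 - a\<^sup>2 * P\<^sup>2) / (3 * l * P\<^sup>2) + 2 * R / P\<^sup>2"
    using l_ge_1 \<open>P > 0\<close> by (simp add: field_simps power2_eq_square)
  then have "\<bar>(Q\<^sup>2 / (3 * l) + 2 * R) / P\<^sup>2 - a\<^sup>2 / (3 * l)\<bar>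
      \<le> \<bar>(Q\<^sup>2 - a\<^sup>2 * P\<^sup>2) / (3 * l * P\<^sup>2)\<bar> + \<bar>2 * R / P\<^sup>2\<bar>"
    by (simp only: abs_triangle_ineq)
  also have "\<dots> \<le> (1 + \<bar>a\<bar>) * A * (5 * \<bar>a\<bar> + A) / 3 / l\<^sup>2 + 2 * A / l\<^sup>2"
    using first second by (rule add_mono)
  finally show ?thesis
    by (simp add: add_divide_distrib)
qed

lemma perturbed_inv_sqrt_expansion:
  "\<bar>1 / sqrt (1 + (Q\<^sup>2 / (3 * l) + 2 * R) / P\<^sup>2) - (1 - a\<^sup>2 / (6 * l))\<bar>
     \<le> (((2 * \<bar>a\<bar> + A)\<^sup>2 / 3 + 2 * A)\<^sup>2 + ((1 + \<bar>a\<bar>) * A * (5 * \<bar>a\<bar> + A) / 3 + 2 * A) / 2) / l\<^sup>2"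
    (is "_ \<le> (?c1\<^sup>2 + ?c2 / 2) / l\<^sup>2")
proof -
  define w where "w = (Q\<^sup>2 / (3 * l) + 2 * R) / P\<^sup>2"
  have "w \<ge> 0"
    using R_nonneg l_ge_1 by (simp add: w_def)
  have "1 / sqrt (1 + w) - (1 - a\<^sup>2 / (6 * l)) = (1 / sqrt (1 + w) - (1 - w / 2)) - (w - a\<^sup>2 / (3 * l)) / 2"
    using l_ge_1 by (simp add: field_simps)
  then have "\<bar>1 / sqrt (1 + w) - (1 - a\<^sup>2 / (6 * l))\<bar>
      \<le> \<bar>1 / sqrt (1 + w) - (1 - w / 2)\<bar> + \<bar>w - a\<^sup>2 / (3 * l)\<bar> / 2"
    using abs_triangle_ineq4[of "1 / sqrt (1 + w) - (1 - w / 2)" "(w - a\<^sup>2 / (3 * l)) / 2"] by simp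
  also have "\<dots> \<le> w\<^sup>2 + \<bar>w - a\<^sup>2 / (3 * l)\<bar> / 2"
    using inv_sqrt_one_plus_approx[OF \<open>w \<ge> 0\<close>] by simp
  also have "\<dots> \<le> ?c1\<^sup>2 / l\<^sup>2 + (?c2 / l\<^sup>2) / 2"
  proof (intro add_mono divide_right_mono)
    show "w\<^sup>2 \<le> ?c1\<^sup>2 / l\<^sup>2"
      using power_mono[OF perturbed_ratio_le[folded w_def] \<open>w \<ge> 0\<close>, of 2] by (simp add: power_divide)
    show "\<bar>w - a\<^sup>2 / (3 * l)\<bar> \<le> ?c2 / l\<^sup>2"
      unfolding w_def by (rule perturbed_ratio_approx)
  qed simp
  also have "\<dots> = (?c1\<^sup>2 + ?c2 / 2) / l\<^sup>2"
    by (simp add: add_divide_distrib)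
  finally show ?thesis
    unfolding w_def .
qed

end

lemma rho_expansion:
  fixes h :: "real \<Rightarrow> real" and l A a :: real
  assumes "exp_bounded h" "A \<ge> 0" "l \<ge> 1" "2 * A \<le> l"
    and diff2: "\<bar>pois_E l ((fwd_diff ^^ 2) h) - 2 / l\<bar> \<le> A / l\<^sup>2"
    and diff3: "\<bar>pois_E l ((fwd_diff ^^ 3) h) - 2 * a / l\<^sup>2\<bar> \<le> A / l ^ 3"
    and residual: "pois_E l (\<lambda>x. (h x - charlier_proj 3 l h x)\<^sup>2) \<le> A / l\<^sup>2"
  shows "\<bar>rho h l - (1 - a\<^sup>2 / (6 * l))\<bar>
           \<le> (((2 * \<bar>a\<bar> + A)\<^sup>2 / 3 + 2 * A)\<^sup>2 + ((1 + \<bar>a\<bar>) * A * (5 * \<bar>a\<bar> + A) / 3 + 2 * A) / 2) / l\<^sup>2"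
proof -
  have "l > 0"
    using assms(3) by simp
  define d2 where "d2 = pois_E l ((fwd_diff ^^ 2) h)"
  define d3 where "d3 = pois_E l ((fwd_diff ^^ 3) h)"
  define R where "R = pois_E l (\<lambda>x. (h x - charlier_proj 3 l h x)\<^sup>2)"
  have "R \<ge> 0"
    unfolding R_def using \<open>l > 0\<close> assms(1) by (intro pois_E_nonneg) simp_all
  have "\<bar>l * d2 - 2\<bar> \<le> A / l"
  proof -
    have "l * d2 - 2 = l * (d2 - 2 / l)"
      using \<open>l > 0\<close> by (simp add: right_diff_distrib)
    then have "\<bar>l * d2 - 2\<bar> = l * \<bar>d2 - 2 / l\<bar>"
      using \<open>l > 0\<close> by (simp add: abs_mult)
    also have "\<dots> \<le> l * (A / l\<^sup>2)"
      using diff2 \<open>l > 0\<close> unfolding d2_def by (intro mult_left_mono) simp_all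
    finally show ?thesis
      using \<open>l > 0\<close> by (simp add: power2_eq_square)
  qed
  have "\<bar>l\<^sup>2 * d3 - 2 * a\<bar> \<le> A / l"
  proof -
    have "l\<^sup>2 * d3 - 2 * a = l\<^sup>2 * (d3 - 2 * a / l\<^sup>2)"
      using \<open>l > 0\<close> by (simp add: field_simps)
    then have "\<bar>l\<^sup>2 * d3 - 2 * a\<bar> = l\<^sup>2 * \<bar>d3 - 2 * a / l\<^sup>2\<bar>"
      by (simp add: abs_mult)
    also have "\<dots> \<le> l\<^sup>2 * (A / l ^ 3)"
      using diff3 \<open>l > 0\<close> unfolding d3_def by (intro mult_left_mono) simp_all
    finally show ?thesis
      using \<open>l > 0\<close> by (simp add: power2_eq_square power3_eq_cube)
  qed
  have "d2 > 0"
    using \<open>\<bar>l * d2 - 2\<bar> \<le> A / l\<close> assms(4) \<open>l > 0\<close>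
    by (smt (verit) divide_le_eq_1 zero_less_mult_iff)
  have "rho h l = 1 / sqrt (1 + ((l\<^sup>2 * d3)\<^sup>2 / (3 * l) + 2 * R) / (l * d2)\<^sup>2)"
    using rho_eq_charlier[OF \<open>l > 0\<close> assms(1)] variance_ratio_eq_inv_sqrt[OF \<open>l > 0\<close> \<open>d2 > 0\<close> \<open>R \<ge> 0\<close>, of d3]
    by (simp add: d2_def d3_def R_def)
  then show ?thesis
    using perturbed_inv_sqrt_expansion[OF assms(2-4) \<open>\<bar>l * d2 - 2\<bar> \<le> A / l\<close>
        \<open>\<bar>l\<^sup>2 * d3 - 2 * a\<bar> \<le> A / l\<close> \<open>R \<ge> 0\<close> residual[folded R_def]]
    by simp
qed

lemma rho_psi_expansion:
  assumes "d > -1"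
  obtains L K where "\<And>l. l \<ge> L \<Longrightarrow> \<bar>rho (psi d l) l - (1 - (d - 1)\<^sup>2 / (6 * l))\<bar> \<le> K / l\<^sup>2"
proof -
  obtain A2 where "A2 \<ge> 0" and A2: "\<And>l. l \<ge> 1 \<Longrightarrow> \<bar>pois_E l ((fwd_diff ^^ 2) (psi d l)) - 2 / l\<bar> \<le> A2 / l\<^sup>2"
    using pois_E_fwd_diff2_psi[OF assms] by blast
  obtain A3 where "A3 \<ge> 0"
    and A3: "\<And>l. l \<ge> 1 \<Longrightarrow> \<bar>pois_E l ((fwd_diff ^^ 3) (psi d l)) - 2 * (d - 1) / l\<^sup>2\<bar> \<le> A3 / l ^ 3"
    using pois_E_fwd_diff3_psi[OF assms] by blast
  obtain AR where "AR \<ge> 0"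
    and AR: "\<And>l. l \<ge> 1 \<Longrightarrow> pois_E l (\<lambda>x. (psi d l x - charlier_proj 3 l (psi d l) x)\<^sup>2) \<le> AR / l\<^sup>2"
    using pois_E_sq_psi_residual[OF assms] by blast
  define A where "A = A2 + A3 + AR"
  have "A \<ge> 0" "A2 \<le> A" "A3 \<le> A" "AR \<le> A"
    using \<open>A2 \<ge> 0\<close> \<open>A3 \<ge> 0\<close> \<open>AR \<ge> 0\<close> by (simp_all add: A_def)
  have "\<bar>rho (psi d l) l - (1 - (d - 1)\<^sup>2 / (6 * l))\<bar>
      \<le> (((2 * \<bar>d - 1\<bar> + A)\<^sup>2 / 3 + 2 * A)\<^sup>2 + ((1 + \<bar>d - 1\<bar>) * A * (5 * \<bar>d - 1\<bar> + A) / 3 + 2 * A) / 2) / l\<^sup>2"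
    if "l \<ge> max 1 (2 * A)" for l
  proof (rule rho_expansion)
    show "l \<ge> 1" "2 * A \<le> l" "exp_bounded (psi d l)"
      using that exp_bounded_psi[OF assms] by auto
    show "\<bar>pois_E l ((fwd_diff ^^ 2) (psi d l)) - 2 / l\<bar> \<le> A / l\<^sup>2"
      using order_trans[OF A2 divide_right_mono[OF \<open>A2 \<le> A\<close>]] \<open>l \<ge> 1\<close> by simp
    show "\<bar>pois_E l ((fwd_diff ^^ 3) (psi d l)) - 2 * (d - 1) / l\<^sup>2\<bar> \<le> A / l ^ 3"
      using order_trans[OF A3 divide_right_mono[OF \<open>A3 \<le> A\<close>]] \<open>l \<ge> 1\<close> by simp
    show "pois_E l (\<lambda>x. (psi d l x - charlier_proj 3 l (psi d l) x)\<^sup>2) \<le> A / l\<^sup>2"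
      using order_trans[OF AR divide_right_mono[OF \<open>AR \<le> A\<close>]] \<open>l \<ge> 1\<close> by simp
  qed (rule \<open>A \<ge> 0\<close>)
  then show thesis
    using that by blast
qed

theorem lemma2p3:
  fixes lam :: "nat \<Rightarrow> real" and d :: real
  assumes pos: "\<And>n. lam n > 0"
    and lim: "filterlim lam at_top sequentially"
    and d: "d > -1"
  shows "(\<lambda>n. rho (psi d (lam n)) (lam n) - (1 - (d - 1)\<^sup>2 / (6 * lam n)))
           \<in> O(\<lambda>n. 1 / (lam n)\<^sup>2)"
proof -
  obtain L K where LK: "\<And>l. l \<ge> L \<Longrightarrow> \<bar>rho (psi d l) l - (1 - (d - 1)\<^sup>2 / (6 * l))\<bar> \<le> K / l\<^sup>2"
    using rho_psi_expansion[OF d] by blast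
  have "eventually (\<lambda>n. L \<le> lam n) sequentially"
    using lim by (simp add: filterlim_at_top)
  then have "eventually (\<lambda>n. norm (rho (psi d (lam n)) (lam n) - (1 - (d - 1)\<^sup>2 / (6 * lam n)))
      \<le> K * norm (1 / (lam n)\<^sup>2)) sequentially"
    by eventually_elim (use LK pos in simp)
  then show ?thesis
    by (rule bigoI)
qed

end
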